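(* Let $n\geq2$, fix $p_0\in\mathbb{S}^n$ and let $\Psi:\mathbb{B}\to B$ be a patch of normal geodesic coordinates centered at $p_0$, where $\mathbb{B}$ is the unit geodesic ball in $\mathbb{S}^n$ centered at $p_0$ and $B$ the unit ball in $\mathbb{R}^n$. Let $r$ be a positive integer and let \[\varphi(x)=\sum_{j=1}^{N'}\frac{c_j}{|x-x_j|^{\frac n2-1}}J_{\frac n2-1}(|x-x_j|)\] with finitely many vectors $c_j\in\mathbb{R}^m$ and points $x_j\in\mathbb{R}^n$. Given any $\delta>0$, for every sufficiently large positive integer $N$ there is an $\mathbb{R}^m$-valued eigenfunction $\psi$ of the Laplacian on $\mathbb{S}^n$ with eigenvalue $N(N+n-1)$ such that \[\Big\|\varphi-\psi\circ\Psi^{-1}\Big(\frac{\cdot}{N}\Big)\Big\|_{C^r(B)}<\delta.\]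
   Context: $\mathbb{S}^n$ is the unit sphere in $\mathbb{R}^{n+1}$ with the round metric. $J_\nu$ is the Bessel function of the first kind of order $\nu$; $t^{-\nu}J_\nu(t)$ is extended smoothly to $t=0$. *)

theory Defs
  imports "HOL-Analysis.Analysis"
begin

definition pderiv_axis :: "'n::finite \<Rightarrow> (real^'n \<Rightarrow> 'b::real_normed_vector) \<Rightarrow> real^'n \<Rightarrow> 'b" where
  "pderiv_axis i f x = vector_derivative (\<lambda>t. f (x + t *\<^sub>R axis i 1)) (at 0)"

fun pderivs :: "'n::finite list \<Rightarrow> (real^'n \<Rightarrow> 'b::real_normed_vector) \<Rightarrow> real^'n \<Rightarrow> 'b" where
  "pderivs [] f = f"
| "pderivs (i # is) f = pderiv_axis i (pderivs is f)"

definition smooth_on_open :: "(real^'n::finite) set \<Rightarrow> (real^'n \<Rightarrow> 'b::real_normed_vector) \<Rightarrow> bool" where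
  "smooth_on_open S f \<longleftrightarrow> open S \<and>
     (\<forall>is. continuous_on S (pderivs is f) \<and>
        (\<forall>i. \<forall>x\<in>S. (\<lambda>t. pderivs is f (x + t *\<^sub>R axis i 1)) differentiable (at 0)))"

definition Cr_values :: "nat \<Rightarrow> (real^'n::finite) set \<Rightarrow> (real^'n \<Rightarrow> 'b::real_normed_vector) \<Rightarrow> real set" where
  "Cr_values r S g = {norm (pderivs is g x) | is x. length is \<le> r \<and> x \<in> S}"

definition Cr_norm :: "nat \<Rightarrow> (real^'n::finite) set \<Rightarrow> (real^'n \<Rightarrow> 'b::real_normed_vector) \<Rightarrow> real" where
  "Cr_norm r S g = Sup (Cr_values r S g)"

text \<open>Bessel function of the first kind of order nu, for t \<ge> 0.\<close>
definition besselJ :: "real \<Rightarrow> real \<Rightarrow> real" where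
  "besselJ \<nu> t = (\<Sum>k. (-1)^k / (fact k * Gamma (real k + \<nu> + 1)) * (t / 2) powr (2 * real k + \<nu>))"

text \<open>t^(-nu) J_nu(t), extended smoothly (by its limit) to t = 0.\<close>
definition besselJ_scaled :: "real \<Rightarrow> real \<Rightarrow> real" where
  "besselJ_scaled \<nu> t = (if t = 0 then 1 / (2 powr \<nu> * Gamma (\<nu> + 1)) else t powr (- \<nu>) * besselJ \<nu> t)"

definition laplacian :: "(real^'k::finite \<Rightarrow> 'b::real_normed_vector) \<Rightarrow> real^'k \<Rightarrow> 'b" where
  "laplacian F x = (\<Sum>i\<in>UNIV. pderivs [i, i] F x)"

text \<open>Laplace-Beltrami eigenfunction on the unit sphere of R^k with eigenvalue lam
  (i.e. -Delta psi = lam psi), defined via the degree-0 homogeneous extension: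
  Delta_S psi = (Delta_{R^k} F)|_{sphere}, where F x = psi (x / |x|).\<close>
definition sphere_eigenfunction :: "(real^'k::finite \<Rightarrow> 'b::real_normed_vector) \<Rightarrow> real \<Rightarrow> bool" where
  "sphere_eigenfunction \<psi> lam \<longleftrightarrow>
     (let F = (\<lambda>x. \<psi> (x /\<^sub>R norm x)) in
       smooth_on_open (- {0}) F \<and>
       (\<forall>x\<in>sphere 0 1. laplacian F x = - lam *\<^sub>R F x) \<and>
       (\<exists>x\<in>sphere 0 1. \<psi> x \<noteq> 0))"

text \<open>Inverse of a normal geodesic coordinate chart centered at p0: the exponential map
  exp_p0 composed with a linear isometry L from R^n onto the tangent space at p0.\<close>
definition geo_chart_inv :: "real^'k::finite \<Rightarrow> (real^'n::finite \<Rightarrow> real^'k) \<Rightarrow> real^'n \<Rightarrow> real^'k" where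
  "geo_chart_inv p0 L y = cos (norm y) *\<^sub>R p0 + (sin (norm y) / norm y) *\<^sub>R L y"

end

(*
  A zonal function p |-> P((1 - p . q)/2) on S^n is an eigenfunction of the Laplacian with
  eigenvalue N(N+n-1) when P solves the hypergeometric equation
  s(1-s) P'' + (n/2 - n s) P' + N(N+n-1) P = 0; its polynomial solution is
  P_N = 2F1(-N, N+n-1; n/2; s).  The eigenfunction is a sum of such functions with poles
  q_j = Psi^-1(x_j/N).  In the chart rescaled by N, the argument N^2 (1 - p . q_j)/2 tends to
  |x - x_j|^2/4, and the coefficients of P_N in powers of N^2 s tend to those of the series of
  t^(1-n/2) J_(n/2-1)(t) in t^2/4, all of them dominated by 2^k/k!.  Every function involved is
  built from coordinates by sums, products and power series with dominated convergent
  coefficients, a class that is stable under differentiation, so the convergence holds in C^r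
  on the unit ball.  A small multiple of the zonal function with pole p0 is added where needed
  to make the eigenfunction non-zero.
*)
theory Submission
  imports Defs "HOL-Library.Cardinality"
begin

definition axis_smooth_on :: "(real^'n::finite) set \<Rightarrow> (real^'n \<Rightarrow> 'b::real_normed_vector) \<Rightarrow> bool" where
  "axis_smooth_on U f \<longleftrightarrow> (\<forall>is i. \<forall>x\<in>U. (\<lambda>t. pderivs is f (x + t *\<^sub>R axis i 1)) differentiable (at 0))"

lemma has_vector_derivative_pderivs:
  assumes "axis_smooth_on U f" "x \<in> U"
  shows "((\<lambda>t. pderivs is f (x + t *\<^sub>R axis i 1)) has_vector_derivative pderivs (i # is) f x) (at 0)"
  using assms by (simp add: axis_smooth_on_def pderiv_axis_def vector_derivative_works)

lemma pderiv_axis_eqI: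
  fixes h k :: "real^'n::finite \<Rightarrow> 'b::real_normed_vector"
  assumes "open U" "x \<in> U" "\<forall>y\<in>U. h y = k y"
    and "((\<lambda>t. k (x + t *\<^sub>R axis i 1)) has_vector_derivative D) (at 0)"
  shows "pderiv_axis i h x = D" "(\<lambda>t. h (x + t *\<^sub>R axis i 1)) differentiable at 0"
proof -
  let ?W = "(\<lambda>t. x + t *\<^sub>R axis i 1) -` U"
  have "open ?W"
    by (rule open_vimage[OF assms(1)]) (intro continuous_intros)
  moreover have "0 \<in> ?W" using assms(2) by simp
  ultimately have "((\<lambda>t. h (x + t *\<^sub>R axis i 1)) has_vector_derivative D) (at 0)"
    by (intro has_vector_derivative_transform_within_open[OF assms(4)]) (use assms(3) in auto)
  then show "pderiv_axis i h x = D" "(\<lambda>t. h (x + t *\<^sub>R axis i 1)) differentiable at 0"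
    unfolding pderiv_axis_def by (auto intro: vector_derivative_at differentiableI_vector)
qed

lemma pderivs_zero: "pderivs is (\<lambda>y::real^'n::finite. 0::'b::real_normed_vector) = (\<lambda>y. 0)"
  by (induction "is") (simp_all add: pderiv_axis_def vector_derivative_at)

lemma axis_smooth_on_zero: "axis_smooth_on U (\<lambda>y::real^'n::finite. 0::'b::real_normed_vector)"
  by (simp add: axis_smooth_on_def pderivs_zero)

lemma
  fixes f :: "real^'n::finite \<Rightarrow> 'b::real_normed_vector"
  assumes T: "bounded_linear T" and U: "open U" and f: "axis_smooth_on U f"
  shows pderivs_bounded_linear: "x \<in> U \<Longrightarrow> pderivs is (\<lambda>y. T (f y)) x = T (pderivs is f x)"
    and axis_smooth_on_bounded_linear: "axis_smooth_on U (\<lambda>y. T (f y))"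
proof -
  have D: "((\<lambda>t. T (pderivs is f (x + t *\<^sub>R axis i 1))) has_vector_derivative T (pderivs (i # is) f x)) (at 0)"
    if "x \<in> U" for x i "is"
    by (rule bounded_linear.has_vector_derivative[OF T has_vector_derivative_pderivs[OF f that]])
  show pd: "x \<in> U \<Longrightarrow> pderivs is (\<lambda>y. T (f y)) x = T (pderivs is f x)" for x "is"
  proof (induction "is" arbitrary: x)
    case (Cons i "is")
    then show ?case using pderiv_axis_eqI(1)[OF U Cons.prems _ D[OF Cons.prems]] by simp
  qed simp
  show "axis_smooth_on U (\<lambda>y. T (f y))"
    unfolding axis_smooth_on_def using pderiv_axis_eqI(2)[OF U _ _ D] pd by blast
qed

lemma
  fixes f g :: "real^'n::finite \<Rightarrow> 'b::real_normed_vector"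
  assumes U: "open U" and f: "axis_smooth_on U f" and g: "axis_smooth_on U g"
  shows pderivs_add: "x \<in> U \<Longrightarrow> pderivs is (\<lambda>y. f y + g y) x = pderivs is f x + pderivs is g x"
    and axis_smooth_on_add: "axis_smooth_on U (\<lambda>y. f y + g y)"
proof -
  have D: "((\<lambda>t. pderivs is f (x + t *\<^sub>R axis i 1) + pderivs is g (x + t *\<^sub>R axis i 1))
      has_vector_derivative pderivs (i # is) f x + pderivs (i # is) g x) (at 0)" if "x \<in> U" for x i "is"
    by (intro has_vector_derivative_add has_vector_derivative_pderivs[OF f that] has_vector_derivative_pderivs[OF g that])
  show pd: "x \<in> U \<Longrightarrow> pderivs is (\<lambda>y. f y + g y) x = pderivs is f x + pderivs is g x" for x "is"
  proof (induction "is" arbitrary: x)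
    case (Cons i "is")
    then show ?case using pderiv_axis_eqI(1)[OF U Cons.prems _ D[OF Cons.prems]] by simp
  qed simp
  show "axis_smooth_on U (\<lambda>y. f y + g y)"
    unfolding axis_smooth_on_def using pderiv_axis_eqI(2)[OF U _ _ D] pd by blast
qed

lemma
  fixes f g :: "real^'n::finite \<Rightarrow> 'b::real_normed_vector"
  assumes U: "open U" and f: "axis_smooth_on U f" and g: "axis_smooth_on U g"
  shows pderivs_diff: "x \<in> U \<Longrightarrow> pderivs is (\<lambda>y. f y - g y) x = pderivs is f x - pderivs is g x"
    and axis_smooth_on_diff: "axis_smooth_on U (\<lambda>y. f y - g y)"
proof -
  have g': "axis_smooth_on U (\<lambda>y. - g y)"
    by (rule axis_smooth_on_bounded_linear[OF bounded_linear_minus[OF bounded_linear_ident] U g])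
  show "x \<in> U \<Longrightarrow> pderivs is (\<lambda>y. f y - g y) x = pderivs is f x - pderivs is g x"
    using pderivs_add[OF U f g'] pderivs_bounded_linear[OF bounded_linear_minus[OF bounded_linear_ident] U g]
    by simp
  show "axis_smooth_on U (\<lambda>y. f y - g y)"
    using axis_smooth_on_add[OF U f g'] by simp
qed

lemma
  fixes D :: "'j \<Rightarrow> real^'n::finite \<Rightarrow> real" and C :: "'j \<Rightarrow> 'b::real_normed_vector"
  assumes U: "open U" and J: "finite J" and D: "\<And>j. j \<in> J \<Longrightarrow> axis_smooth_on U (D j)"
  shows pderivs_lincomb:
      "x \<in> U \<Longrightarrow> pderivs is (\<lambda>y. \<Sum>j\<in>J. D j y *\<^sub>R C j) x = (\<Sum>j\<in>J. pderivs is (D j) x *\<^sub>R C j)"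
    and axis_smooth_on_lincomb: "axis_smooth_on U (\<lambda>y. \<Sum>j\<in>J. D j y *\<^sub>R C j)"
proof -
  have "axis_smooth_on U (\<lambda>y. \<Sum>j\<in>J. D j y *\<^sub>R C j) \<and>
      (\<forall>x\<in>U. pderivs is (\<lambda>y. \<Sum>j\<in>J. D j y *\<^sub>R C j) x = (\<Sum>j\<in>J. pderivs is (D j) x *\<^sub>R C j))" for "is"
    using J D
  proof (induction J rule: finite_induct)
    case empty
    then show ?case by (simp add: axis_smooth_on_zero pderivs_zero)
  next
    case (insert j J)
    have Dj: "axis_smooth_on U (\<lambda>y. D j y *\<^sub>R C j)"
      by (rule axis_smooth_on_bounded_linear[OF bounded_linear_scaleR_left[of "C j"] U insert.prems]) simp
    show ?case
      using insert pderivs_add[OF U Dj] axis_smooth_on_add[OF U Dj]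
        pderivs_bounded_linear[OF bounded_linear_scaleR_left[of "C j"] U insert.prems[of j]]
      by simp
  qed
  then show "x \<in> U \<Longrightarrow> pderivs is (\<lambda>y. \<Sum>j\<in>J. D j y *\<^sub>R C j) x = (\<Sum>j\<in>J. pderivs is (D j) x *\<^sub>R C j)"
    and "axis_smooth_on U (\<lambda>y. \<Sum>j\<in>J. D j y *\<^sub>R C j)"
    by blast+
qed

lemma Cr_norm_lincomb_less:
  fixes D :: "'j \<Rightarrow> real^'n::finite \<Rightarrow> real" and C :: "'j \<Rightarrow> 'b::real_normed_vector"
  assumes J: "finite J" and S: "S \<noteq> {}" and D: "\<And>j. j \<in> J \<Longrightarrow> axis_smooth_on UNIV (D j)"
    and bound: "\<And>j is x. j \<in> J \<Longrightarrow> length is \<le> r \<Longrightarrow> x \<in> S \<Longrightarrow> \<bar>pderivs is (D j) x\<bar> \<le> b j"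
    and less: "(\<Sum>j\<in>J. b j * norm (C j)) < \<delta>"
  shows "bdd_above (Cr_values r S (\<lambda>x. \<Sum>j\<in>J. D j x *\<^sub>R C j))
    \<and> Cr_norm r S (\<lambda>x. \<Sum>j\<in>J. D j x *\<^sub>R C j) < \<delta>"
proof -
  let ?g = "\<lambda>x. \<Sum>j\<in>J. D j x *\<^sub>R C j"
  have le: "u \<le> (\<Sum>j\<in>J. b j * norm (C j))" if u_mem: "u \<in> Cr_values r S ?g" for u
  proof -
    obtain "is" x where u: "u = norm (pderivs is ?g x)" "length is \<le> r" "x \<in> S"
      using u_mem unfolding Cr_values_def by blast
    have "norm (pderivs is ?g x) = norm (\<Sum>j\<in>J. pderivs is (D j) x *\<^sub>R C j)"
      by (simp add: pderivs_lincomb[OF open_UNIV J D])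
    also have "\<dots> \<le> (\<Sum>j\<in>J. \<bar>pderivs is (D j) x\<bar> * norm (C j))"
      by (rule order_trans[OF norm_sum]) simp
    also have "\<dots> \<le> (\<Sum>j\<in>J. b j * norm (C j))"
      using bound u(2,3) by (intro sum_mono mult_right_mono) auto
    finally show ?thesis using u(1) by simp
  qed
  obtain x where "x \<in> S" using S by blast
  then have "norm (pderivs [] ?g x) \<in> Cr_values r S ?g"
    unfolding Cr_values_def by (intro CollectI exI[of _ "[]"] exI[of _ x]) simp
  then have "Cr_values r S ?g \<noteq> {}" by blast
  moreover have "bdd_above (Cr_values r S ?g)" using le by (rule bdd_aboveI)
  ultimately have "bdd_above (Cr_values r S ?g)" "Cr_norm r S ?g \<le> (\<Sum>j\<in>J. b j * norm (C j))"
    unfolding Cr_norm_def using le by (auto intro: cSup_least)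
  with less show ?thesis by simp
qed

lemma Cr_norm_perturbed_lincomb_less:
  fixes B F :: "nat \<Rightarrow> real^'n::finite \<Rightarrow> real" and c :: "nat \<Rightarrow> 'b::real_normed_vector" and v :: 'b
  assumes B: "\<And>j. axis_smooth_on UNIV (B j)" and F: "\<And>j. axis_smooth_on UNIV (F j)" and S: "S \<noteq> {}"
    and close: "\<And>j is x. j \<le> N' \<Longrightarrow> length is \<le> r \<Longrightarrow> x \<in> S \<Longrightarrow>
      \<bar>pderivs is (F j) x - pderivs is (B j) x\<bar> \<le> \<eta>"
    and B0: "\<And>is x. length is \<le> r \<Longrightarrow> x \<in> S \<Longrightarrow> \<bar>pderivs is (B 0) x\<bar> \<le> M"
    and less: "(M + \<eta>) * (\<bar>e\<bar> * norm v) + \<eta> * (\<Sum>j\<in>{1..N'}. norm (c j)) < \<delta>"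
  defines "g \<equiv> \<lambda>x. (\<Sum>j\<in>{1..N'}. B j x *\<^sub>R c j) - (\<Sum>j\<in>{0..N'}. F j x *\<^sub>R (if j = 0 then e *\<^sub>R v else c j))"
  shows "bdd_above (Cr_values r S g) \<and> Cr_norm r S g < \<delta>"
proof -
  define C where "C j = (if j = 0 then e *\<^sub>R v else c j)" for j
  define B' where "B' j = (if j = 0 then (\<lambda>x. 0) else B j)" for j
  have B': "axis_smooth_on UNIV (B' j)" for j
    unfolding B'_def by (simp add: B axis_smooth_on_zero)
  have split: "{0..N'} = insert 0 {1..N'}" by auto
  have g: "g = (\<lambda>x. \<Sum>j\<in>{0..N'}. (B' j x - F j x) *\<^sub>R C j)"
    unfolding g_def C_def[symmetric]
    by (simp add: split B'_def C_def scaleR_diff_left sum_subtractf)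
  have bound: "\<bar>pderivs is (\<lambda>x. B' j x - F j x) x\<bar> \<le> (if j = 0 then M + \<eta> else \<eta>)"
    if "j \<in> {0..N'}" "length is \<le> r" "x \<in> S" for j "is" x
    using close[of j "is" x] B0[of "is" x] that
    unfolding pderivs_diff[OF open_UNIV B' F UNIV_I] by (auto simp: B'_def pderivs_zero)
  have "(\<Sum>j\<in>{0..N'}. (if j = 0 then M + \<eta> else \<eta>) * norm (C j)) < \<delta>"
    using less by (simp add: split C_def sum_distrib_left)
  from Cr_norm_lincomb_less[OF finite_atLeastAtMost S axis_smooth_on_diff[OF open_UNIV B' F] bound this]
  show ?thesis unfolding g .
qed

section \<open>Power series with convergent coefficient sequences\<close>

definition powser :: "(nat \<Rightarrow> real) \<Rightarrow> real \<Rightarrow> real" where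
  "powser c w = (\<Sum>k. c k * w ^ k)"

definition coeffs_tendsto :: "(nat \<Rightarrow> nat \<Rightarrow> real) \<Rightarrow> (nat \<Rightarrow> real) \<Rightarrow> bool" where
  "coeffs_tendsto cN c \<longleftrightarrow> (\<forall>k. (\<lambda>N. cN N k) \<longlonglongrightarrow> c k) \<and>
     (\<exists>D. (\<forall>N k. \<bar>cN N k\<bar> \<le> D k) \<and> (\<forall>R. summable (\<lambda>k. D k * R ^ k)))"

lemma coeffs_tendstoD:
  assumes "coeffs_tendsto cN c"
  obtains D where "\<And>N k. \<bar>cN N k\<bar> \<le> D k" "\<And>k. \<bar>c k\<bar> \<le> D k" "\<And>R. summable (\<lambda>k. D k * R ^ k)"
proof -
  from assms obtain D where D: "\<And>N k. \<bar>cN N k\<bar> \<le> D k" "\<And>R. summable (\<lambda>k. D k * R ^ k)"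
    and lim: "\<And>k. (\<lambda>N. cN N k) \<longlonglongrightarrow> c k" unfolding coeffs_tendsto_def by auto
  have "\<bar>c k\<bar> \<le> D k" for k
    by (rule LIMSEQ_le_const2[OF tendsto_rabs[OF lim[of k]]]) (use D in auto)
  with D that show ?thesis by blast
qed

lemma summable_powser_dominated:
  fixes a D :: "nat \<Rightarrow> real"
  assumes "\<And>k. \<bar>a k\<bar> \<le> D k" "\<And>R. summable (\<lambda>k. D k * R ^ k)"
  shows "summable (\<lambda>k. a k * w ^ k)"
proof (rule summable_rabs_cancel, rule summable_comparison_test[OF _ assms(2)[of "\<bar>w\<bar>"]])
  show "\<exists>N. \<forall>k\<ge>N. norm \<bar>a k * w ^ k\<bar> \<le> D k * \<bar>w\<bar> ^ k"
    using assms(1) by (simp add: abs_mult power_abs mult_right_mono)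
qed

lemma
  assumes "coeffs_tendsto cN c"
  shows summable_powser_coeffs_seq: "summable (\<lambda>k. cN N k * w ^ k)"
    and summable_powser_coeffs_lim: "summable (\<lambda>k. c k * w ^ k)"
  using coeffs_tendstoD[OF assms] summable_powser_dominated by metis+

lemma powser_has_real_derivative:
  assumes "\<And>w. summable (\<lambda>k. c k * w ^ k)"
  shows "(powser c has_real_derivative powser (diffs c) w) (at w)"
  unfolding powser_def by (rule termdiffs_strong_converges_everywhere[OF assms])

lemma continuous_on_powser: "(\<And>w. summable (\<lambda>k. c k * w ^ k)) \<Longrightarrow> continuous_on S (powser c)"
  by (intro continuous_at_imp_continuous_on ballI DERIV_isCont[OF powser_has_real_derivative]) auto

lemma coeffs_tendsto_diffs:
  assumes "coeffs_tendsto cN c"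
  shows "coeffs_tendsto (\<lambda>N. diffs (cN N)) (diffs c)"
proof -
  from assms have lim: "\<And>k. (\<lambda>N. cN N k) \<longlonglongrightarrow> c k" unfolding coeffs_tendsto_def by auto
  obtain D where D: "\<And>N k. \<bar>cN N k\<bar> \<le> D k" "\<And>R. summable (\<lambda>k. D k * R ^ k)"
    using coeffs_tendstoD[OF assms] by metis
  have "\<bar>diffs (cN N) k\<bar> \<le> diffs D k" for N k
    using mult_left_mono[OF D(1), of "real (Suc k)" N "Suc k"] by (simp add: diffs_def abs_mult)
  moreover have "summable (\<lambda>k. diffs D k * R ^ k)" for R
    by (rule termdiff_converges_all) (rule D(2))
  moreover have "(\<lambda>N. diffs (cN N) k) \<longlonglongrightarrow> diffs c k" for k
    unfolding diffs_def by (intro tendsto_mult tendsto_const lim)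
  ultimately show ?thesis unfolding coeffs_tendsto_def by blast
qed

text \<open>Tannery's theorem, with the dominating entire series as majorant.\<close>
lemma powser_coeffs_tendsto_uniformly:
  assumes "coeffs_tendsto cN c" "\<epsilon> > 0"
  shows "\<forall>\<^sub>F N in sequentially. \<forall>w. \<bar>w\<bar> \<le> M \<longrightarrow> \<bar>powser (cN N) w - powser c w\<bar> < \<epsilon>"
proof -
  from assms have lim: "\<And>k. (\<lambda>N. cN N k) \<longlonglongrightarrow> c k" unfolding coeffs_tendsto_def by auto
  obtain D where D: "\<And>N k. \<bar>cN N k\<bar> \<le> D k" "\<And>k. \<bar>c k\<bar> \<le> D k" "\<And>R. summable (\<lambda>k. D k * R ^ k)"
    using coeffs_tendstoD[OF assms(1)] by blast
  define e where "e N = (\<Sum>k. \<bar>cN N k - c k\<bar> * \<bar>M\<bar> ^ k)" for N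
  have maj: "\<bar>cN N k - c k\<bar> * \<bar>M\<bar> ^ k \<le> 2 * D k * \<bar>M\<bar> ^ k" for N k
    using D(1)[of N k] D(2)[of k] by (intro mult_right_mono) auto
  have sm: "summable (\<lambda>k. 2 * D k * \<bar>M\<bar> ^ k)"
    using summable_mult[OF D(3), of 2] by (simp add: mult.assoc)
  have lim0: "(\<lambda>N. \<bar>cN N k - c k\<bar> * \<bar>M\<bar> ^ k) \<longlonglongrightarrow> 0" for k
    using tendsto_mult[OF tendsto_rabs[OF tendsto_diff[OF lim tendsto_const]] tendsto_const, of k "c k" "\<bar>M\<bar> ^ k"]
    by simp
  have bd: "\<forall>\<^sub>F (k, N) in sequentially \<times>\<^sub>F sequentially.
      norm (\<bar>cN N k - c k\<bar> * \<bar>M\<bar> ^ k) \<le> 2 * D k * \<bar>M\<bar> ^ k"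
    by (rule always_eventually) (use maj in \<open>auto simp: abs_mult\<close>)
  have "e \<longlonglongrightarrow> (\<Sum>k. 0)"
    unfolding e_def using tannerys_theorem[OF lim0 bd sm] by simp
  then have "\<forall>\<^sub>F N in sequentially. e N < \<epsilon>" using assms(2) by (simp add: order_tendstoD)
  then show ?thesis
  proof (rule eventually_mono, intro allI impI)
    fix N w assume eN: "e N < \<epsilon>" and w: "\<bar>w\<bar> \<le> M"
    have s2: "summable (\<lambda>k. \<bar>cN N k - c k\<bar> * \<bar>M\<bar> ^ k)"
      by (rule summable_comparison_test[OF _ sm]) (use maj in auto)
    have bnd: "\<bar>(cN N k - c k) * w ^ k\<bar> \<le> \<bar>cN N k - c k\<bar> * \<bar>M\<bar> ^ k" for k
      using w by (auto simp: abs_mult power_abs intro!: mult_left_mono power_mono)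
    have s3: "summable (\<lambda>k. \<bar>(cN N k - c k) * w ^ k\<bar>)"
      by (rule summable_comparison_test[OF _ s2]) (use bnd in simp)
    have "powser (cN N) w - powser c w = (\<Sum>k. (cN N k - c k) * w ^ k)"
      unfolding powser_def
      using suminf_diff[OF summable_powser_coeffs_seq summable_powser_coeffs_lim] assms(1)
      by (simp add: left_diff_distrib)
    also have "\<bar>\<dots>\<bar> \<le> (\<Sum>k. \<bar>(cN N k - c k) * w ^ k\<bar>)"
      using summable_rabs[OF s3] .
    also have "\<dots> \<le> e N" unfolding e_def
      by (rule suminf_le[OF bnd s3 s2])
    finally show "\<bar>powser (cN N) w - powser c w\<bar> < \<epsilon>" using eN by simp
  qed
qed

section \<open>Sequences of analytic functions converging with all derivatives\<close>

text \<open>Closed under axis derivatives (\<open>analytic_seq_axis_deriv\<close>), so that \<open>F N\<close> converges to \<open>f\<close>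
  with all partial derivatives, uniformly on compacta.\<close>
inductive analytic_seq :: "(nat \<Rightarrow> real^'n::finite \<Rightarrow> real) \<Rightarrow> (real^'n \<Rightarrow> real) \<Rightarrow> bool" where
  const: "a \<longlonglongrightarrow> l \<Longrightarrow> analytic_seq (\<lambda>N x. a N) (\<lambda>x. l)"
| coord: "analytic_seq (\<lambda>N x. x $ j) (\<lambda>x. x $ j)"
| add: "analytic_seq F f \<Longrightarrow> analytic_seq G g \<Longrightarrow> analytic_seq (\<lambda>N x. F N x + G N x) (\<lambda>x. f x + g x)"
| mult: "analytic_seq F f \<Longrightarrow> analytic_seq G g \<Longrightarrow> analytic_seq (\<lambda>N x. F N x * G N x) (\<lambda>x. f x * g x)"
| powser: "analytic_seq F f \<Longrightarrow> coeffs_tendsto cN c \<Longrightarrow>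
    analytic_seq (\<lambda>N x. powser (cN N) (F N x)) (\<lambda>x. powser c (f x))"

lemma analytic_seq_const: "analytic_seq (\<lambda>N x. l) (\<lambda>x. l)"
  using analytic_seq.const[of "\<lambda>N. l" l] by simp

lemma analytic_seq_sum:
  fixes F :: "'i \<Rightarrow> nat \<Rightarrow> real^'n::finite \<Rightarrow> real"
  shows "finite I \<Longrightarrow> (\<And>i. i \<in> I \<Longrightarrow> analytic_seq (F i) (f i)) \<Longrightarrow>
    analytic_seq (\<lambda>N x. \<Sum>i\<in>I. F i N x) (\<lambda>x. \<Sum>i\<in>I. f i x)"
  by (induction I rule: finite_induct) (simp_all add: analytic_seq_const[of 0] analytic_seq.add)

lemma analytic_seq_axis_deriv:
  assumes "analytic_seq F f"
  shows "\<exists>G g. analytic_seq G g \<and>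
    (\<forall>N x. ((\<lambda>t. F N (x + t *\<^sub>R axis d 1)) has_real_derivative G N x) (at 0)) \<and>
    (\<forall>x. ((\<lambda>t. f (x + t *\<^sub>R axis d 1)) has_real_derivative g x) (at 0))"
  using assms
proof (induction rule: analytic_seq.induct)
  case (const a l)
  show ?case
    by (intro exI[of _ "\<lambda>N x. 0"] exI[of _ "\<lambda>x. 0"] conjI analytic_seq_const allI)
      (auto intro: derivative_eq_intros)
next
  case (coord j)
  have "((\<lambda>t. (x + t *\<^sub>R axis d 1) $ j) has_real_derivative axis d 1 $ j) (at 0)" for x :: "real^'a"
    by (auto intro!: derivative_eq_intros)
  then show ?case
    by (intro exI[of _ "\<lambda>N x. axis d 1 $ j"] exI[of _ "\<lambda>x. axis d 1 $ j"] conjI analytic_seq_const) auto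
next
  case (add F f G g)
  then obtain F' f' G' g' where "analytic_seq F' f'" "analytic_seq G' g'"
    "\<forall>N x. ((\<lambda>t. F N (x + t *\<^sub>R axis d 1)) has_real_derivative F' N x) (at 0)"
    "\<forall>x. ((\<lambda>t. f (x + t *\<^sub>R axis d 1)) has_real_derivative f' x) (at 0)"
    "\<forall>N x. ((\<lambda>t. G N (x + t *\<^sub>R axis d 1)) has_real_derivative G' N x) (at 0)"
    "\<forall>x. ((\<lambda>t. g (x + t *\<^sub>R axis d 1)) has_real_derivative g' x) (at 0)"
    by blast
  then show ?case
    by (intro exI[of _ "\<lambda>N x. F' N x + G' N x"] exI[of _ "\<lambda>x. f' x + g' x"])
      (auto intro: analytic_seq.add DERIV_add)
next
  case (mult F f G g)
  then obtain F' f' G' g' where "analytic_seq F' f'" "analytic_seq G' g'"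
    "\<forall>N x. ((\<lambda>t. F N (x + t *\<^sub>R axis d 1)) has_real_derivative F' N x) (at 0)"
    "\<forall>x. ((\<lambda>t. f (x + t *\<^sub>R axis d 1)) has_real_derivative f' x) (at 0)"
    "\<forall>N x. ((\<lambda>t. G N (x + t *\<^sub>R axis d 1)) has_real_derivative G' N x) (at 0)"
    "\<forall>x. ((\<lambda>t. g (x + t *\<^sub>R axis d 1)) has_real_derivative g' x) (at 0)"
    by blast
  with mult.hyps show ?case
    by (intro exI[of _ "\<lambda>N x. F' N x * G N x + F N x * G' N x"] exI[of _ "\<lambda>x. f' x * g x + f x * g' x"])
      (auto intro!: analytic_seq.add analytic_seq.mult DERIV_mult'[THEN DERIV_cong] simp: algebra_simps)
next
  case (powser F f cN c)
  then obtain F' f' where F': "analytic_seq F' f'"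
    "\<forall>N x. ((\<lambda>t. F N (x + t *\<^sub>R axis d 1)) has_real_derivative F' N x) (at 0)"
    "\<forall>x. ((\<lambda>t. f (x + t *\<^sub>R axis d 1)) has_real_derivative f' x) (at 0)"
    by blast
  note dN = powser_has_real_derivative[OF summable_powser_coeffs_seq[OF powser.hyps(2)]]
  note d = powser_has_real_derivative[OF summable_powser_coeffs_lim[OF powser.hyps(2)]]
  show ?case
  proof (intro exI[of _ "\<lambda>N x. powser (diffs (cN N)) (F N x) * F' N x"]
      exI[of _ "\<lambda>x. powser (diffs c) (f x) * f' x"] conjI allI)
    show "analytic_seq (\<lambda>N x. powser (diffs (cN N)) (F N x) * F' N x) (\<lambda>x. powser (diffs c) (f x) * f' x)"
      by (intro analytic_seq.mult analytic_seq.powser F'(1) powser.hyps coeffs_tendsto_diffs)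
    fix N x
    show "((\<lambda>t. powser (cN N) (F N (x + t *\<^sub>R axis d 1))) has_real_derivative
        powser (diffs (cN N)) (F N x) * F' N x) (at 0)"
      using DERIV_chain2[OF dN F'(2)[rule_format, of N x]] by simp
    show "((\<lambda>t. powser c (f (x + t *\<^sub>R axis d 1))) has_real_derivative
        powser (diffs c) (f x) * f' x) (at 0)"
      using DERIV_chain2[OF d F'(3)[rule_format, of x]] by simp
  qed
qed

lemma analytic_seq_continuous:
  assumes "analytic_seq F f"
  shows "continuous_on UNIV f" "continuous_on UNIV (F N)"
proof -
  have "continuous_on UNIV f \<and> (\<forall>N. continuous_on UNIV (F N))"
    using assms
  proof (induction rule: analytic_seq.induct)
    case (powser F f cN c)
    have "continuous_on UNIV (powser c)" "continuous_on UNIV (powser (cN N))" for N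
      using continuous_on_powser summable_powser_coeffs_seq summable_powser_coeffs_lim powser.hyps(2)
      by blast+
    then show ?case using powser.IH by (auto intro: continuous_on_compose2[of UNIV])
  qed (auto intro!: continuous_intros)
  then show "continuous_on UNIV f" "continuous_on UNIV (F N)" by blast+
qed

lemma continuous_on_bounded_on_compact:
  fixes f :: "real^'n::finite \<Rightarrow> real"
  assumes "continuous_on UNIV f" "compact K"
  obtains M where "M > 0" "\<And>x. x \<in> K \<Longrightarrow> \<bar>f x\<bar> \<le> M"
proof -
  have "compact (f ` K)"
    by (rule compact_continuous_image[OF continuous_on_subset[OF assms(1)] assms(2)]) simp
  then obtain B where "\<forall>y\<in>f ` K. norm y \<le> B" using compact_imp_bounded bounded_iff by metis
  then show ?thesis by (intro that[of "\<bar>B\<bar> + 1"]) force+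
qed

lemma analytic_seq_uniform_limit:
  assumes "analytic_seq F f" "compact K"
  shows "uniform_limit K F f sequentially"
  using assms(1)
proof (induction rule: analytic_seq.induct)
  case (const a l)
  then show ?case
    by (intro uniform_limitI) (auto simp: tendsto_iff elim!: allE eventually_mono)
next
  case (coord j)
  show ?case by (rule uniform_limit_const)
next
  case (add F f G g)
  with uniform_limit_add show ?case by blast
next
  case (mult F f G g)
  have "bounded (f ` K)" "bounded (g ` K)"
    using analytic_seq_continuous(1)[OF mult.hyps(1)] analytic_seq_continuous(1)[OF mult.hyps(2)] assms(2)
    by (auto intro!: compact_imp_bounded compact_continuous_image intro: continuous_on_subset)
  with mult.IH show ?case by (intro uniform_lim_mult)
next
  case (powser F f cN c)
  obtain M where M: "\<And>x. x \<in> K \<Longrightarrow> \<bar>f x\<bar> \<le> M"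
    using continuous_on_bounded_on_compact[OF analytic_seq_continuous(1)[OF powser.hyps(1)] assms(2)] by metis
  have "\<forall>\<^sub>F N in sequentially. \<forall>x\<in>K. dist (F N x) (f x) < 1"
    by (rule uniform_limitD[OF powser.IH]) simp
  then have near: "\<forall>\<^sub>F N in sequentially. \<forall>x\<in>K. F N x \<in> cball 0 (M + 1)"
  proof (rule eventually_mono, intro ballI)
    fix N x assume "\<forall>x\<in>K. dist (F N x) (f x) < 1" "x \<in> K"
    then have "\<bar>F N x - f x\<bar> < 1" "\<bar>f x\<bar> \<le> M" using M by (auto simp: dist_real_def)
    then show "F N x \<in> cball 0 (M + 1)" by (simp add: dist_real_def)
  qed
  have "uniform_limit K (\<lambda>N x. powser (cN N) (F N x) - powser c (F N x)) (\<lambda>x. 0) sequentially"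
  proof (rule uniform_limitI)
    fix \<epsilon> :: real assume "\<epsilon> > 0"
    from near powser_coeffs_tendsto_uniformly[OF powser.hyps(2) this, of "M + 1"]
    show "\<forall>\<^sub>F N in sequentially. \<forall>x\<in>K. dist (powser (cN N) (F N x) - powser c (F N x)) 0 < \<epsilon>"
      by eventually_elim (simp add: dist_real_def)
  qed
  moreover have "uniform_limit K (\<lambda>N x. powser c (F N x)) (\<lambda>x. powser c (f x)) sequentially"
    using near summable_powser_coeffs_lim[OF powser.hyps(2)]
    by (intro uniform_limit_compose_uniformly_continuous_on[OF powser.IH, where B = "cball 0 (M + 1)"]
        compact_uniformly_continuous continuous_on_powser) auto
  ultimately show ?case
    using uniform_limit_add by fastforce
qed

lemma analytic_seq_pderivs:
  assumes "analytic_seq F f"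
  shows "analytic_seq (\<lambda>N. pderivs is (F N)) (pderivs is f)"
proof (induction "is")
  case (Cons i "is")
  from analytic_seq_axis_deriv[OF Cons.IH, of i] obtain G g where G: "analytic_seq G g"
    "\<forall>N x. ((\<lambda>t. pderivs is (F N) (x + t *\<^sub>R axis i 1)) has_real_derivative G N x) (at 0)"
    "\<forall>x. ((\<lambda>t. pderivs is f (x + t *\<^sub>R axis i 1)) has_real_derivative g x) (at 0)"
    by blast
  then have "(\<lambda>N. pderivs (i # is) (F N)) = G" "pderivs (i # is) f = g"
    by (auto simp: pderiv_axis_def fun_eq_iff has_real_derivative_iff_has_vector_derivative
        intro!: vector_derivative_at)
  with G(1) show ?case by simp
qed (use assms in simp)

lemma analytic_seq_axis_smooth_on:
  assumes "analytic_seq F f"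
  shows "axis_smooth_on U (F N)" "axis_smooth_on U f"
  using analytic_seq_axis_deriv[OF analytic_seq_pderivs[OF assms]]
  unfolding axis_smooth_on_def has_real_derivative_iff_has_vector_derivative
  by (meson differentiableI_vector)+

lemma analytic_seq_Cr_tendsto:
  fixes F :: "nat \<Rightarrow> real^'n::finite \<Rightarrow> real"
  assumes "analytic_seq F f" "compact K" "\<epsilon> > 0"
  shows "\<forall>\<^sub>F N in sequentially. \<forall>is. length is \<le> r \<longrightarrow>
    (\<forall>x\<in>K. \<bar>pderivs is (F N) x - pderivs is f x\<bar> < \<epsilon>)"
proof -
  have fin: "finite {is :: 'n list. set is \<subseteq> UNIV \<and> length is \<le> r}"
    by (rule finite_lists_length_le) simp
  have "\<forall>\<^sub>F N in sequentially. \<forall>x\<in>K. dist (pderivs is (F N) x) (pderivs is f x) < \<epsilon>" for "is"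
    by (rule uniform_limitD[OF analytic_seq_uniform_limit[OF analytic_seq_pderivs[OF assms(1)] assms(2)] assms(3)])
  then have "\<forall>\<^sub>F N in sequentially. \<forall>is\<in>{is. set is \<subseteq> UNIV \<and> length is \<le> r}.
      \<forall>x\<in>K. dist (pderivs is (F N) x) (pderivs is f x) < \<epsilon>"
    by (intro eventually_ball_finite[OF fin] ballI)
  then show ?thesis
    by (rule eventually_mono) (simp add: dist_real_def)
qed

lemma analytic_seq_Cr_bounded:
  fixes F :: "nat \<Rightarrow> real^'n::finite \<Rightarrow> real"
  assumes "analytic_seq F f" "compact K"
  obtains M where "\<And>is x. length is \<le> r \<Longrightarrow> x \<in> K \<Longrightarrow> \<bar>pderivs is f x\<bar> \<le> M"
proof -
  have "\<exists>M. \<forall>x\<in>K. \<bar>pderivs is f x\<bar> \<le> M" for "is"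
    using continuous_on_bounded_on_compact[OF
        analytic_seq_continuous(1)[OF analytic_seq_pderivs[OF assms(1)]] assms(2)]
    by metis
  then obtain Mf where Mf: "\<And>is x. x \<in> K \<Longrightarrow> \<bar>pderivs is f x\<bar> \<le> Mf is" by metis
  define IS where "IS = {is :: 'n list. set is \<subseteq> UNIV \<and> length is \<le> r}"
  have "finite IS" unfolding IS_def by (rule finite_lists_length_le) simp
  have "\<bar>pderivs is f x\<bar> \<le> (\<Sum>is\<in>IS. \<bar>Mf is\<bar>)" if "length is \<le> r" "x \<in> K" for "is" x
  proof -
    have "is \<in> IS" unfolding IS_def using that(1) by simp
    then have "\<bar>Mf is\<bar> \<le> (\<Sum>is\<in>IS. \<bar>Mf is\<bar>)"
      by (rule member_le_sum) (use \<open>finite IS\<close> in auto)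
    with Mf[OF that(2), of "is"] show ?thesis by linarith
  qed
  then show ?thesis by (rule that)
qed

lemma has_real_derivative_along_axis_inner:
  fixes y q :: "real^'k::finite"
  shows "((\<lambda>t. (y + t *\<^sub>R axis d 1) \<bullet> q) has_real_derivative q $ d) (at t0)"
proof -
  have "(\<lambda>t. (y + t *\<^sub>R axis d 1) \<bullet> q) = (\<lambda>t. y \<bullet> q + t * q $ d)"
    by (auto simp: inner_add_left inner_axis')
  then show ?thesis by (auto intro!: derivative_eq_intros)
qed

lemma has_real_derivative_along_axis_coord:
  fixes y :: "real^'k::finite"
  shows "((\<lambda>t. (y + t *\<^sub>R axis d 1) $ j) has_real_derivative axis d 1 $ j) (at t0)"
  by (auto intro!: derivative_eq_intros)

definition inv_norm :: "real^'k::finite \<Rightarrow> real" where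
  "inv_norm y = 1 / norm y"

lemma has_real_derivative_along_axis_inv_norm:
  fixes y :: "real^'k::finite"
  assumes "y \<noteq> 0"
  shows "((\<lambda>t. inv_norm (y + t *\<^sub>R axis d 1)) has_real_derivative - (y $ d) * inv_norm y ^ 3) (at 0)"
proof -
  have line: "((\<lambda>t. y + t *\<^sub>R axis d 1) has_derivative (\<lambda>t. t *\<^sub>R axis d 1)) (at 0)"
    by (intro derivative_eq_intros) auto
  have "(norm has_derivative (\<lambda>h. h \<bullet> sgn (y + 0 *\<^sub>R axis d 1))) (at (y + 0 *\<^sub>R axis d 1))"
    using has_derivative_norm[of y] assms by simp
  from has_derivative_compose[OF line this]
  have "((\<lambda>t. norm (y + t *\<^sub>R axis d 1)) has_derivative (\<lambda>t. (y $ d / norm y) * t)) (at 0)"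
    by (simp add: o_def sgn_div_norm inner_axis' divide_inverse mult_ac)
  then have "((\<lambda>t. norm (y + t *\<^sub>R axis d 1)) has_real_derivative y $ d / norm y) (at 0)"
    unfolding has_field_derivative_def by (rule has_derivative_eq_rhs) auto
  from DERIV_inverse'[OF this] assms show ?thesis
    by (simp add: inv_norm_def divide_inverse power3_eq_cube mult_ac)
qed

inductive analytic_off_origin :: "(real^'k::finite \<Rightarrow> real) \<Rightarrow> bool" where
  const: "analytic_off_origin (\<lambda>x. c)"
| coord: "analytic_off_origin (\<lambda>x. x $ j)"
| inv_norm: "analytic_off_origin inv_norm"
| add: "analytic_off_origin f \<Longrightarrow> analytic_off_origin g \<Longrightarrow> analytic_off_origin (\<lambda>x. f x + g x)"
| mult: "analytic_off_origin f \<Longrightarrow> analytic_off_origin g \<Longrightarrow> analytic_off_origin (\<lambda>x. f x * g x)"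
| powser: "analytic_off_origin f \<Longrightarrow> (\<And>w. summable (\<lambda>k. c k * w ^ k)) \<Longrightarrow>
    analytic_off_origin (\<lambda>x. powser c (f x))"

lemma analytic_off_origin_sum:
  fixes f :: "'i \<Rightarrow> real^'k::finite \<Rightarrow> real"
  shows "finite I \<Longrightarrow> (\<And>i. i \<in> I \<Longrightarrow> analytic_off_origin (f i)) \<Longrightarrow>
    analytic_off_origin (\<lambda>y. \<Sum>i\<in>I. f i y)"
  by (induction I rule: finite_induct) (simp_all add: analytic_off_origin.const[of 0] analytic_off_origin.add)

lemma analytic_off_origin_axis_deriv:
  assumes "analytic_off_origin f"
  shows "\<exists>g. analytic_off_origin g \<and>
    (\<forall>y. y \<noteq> 0 \<longrightarrow> ((\<lambda>t. f (y + t *\<^sub>R axis d 1)) has_real_derivative g y) (at 0))"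
  using assms
proof (induction rule: analytic_off_origin.induct)
  case (const c)
  show ?case by (intro exI[of _ "\<lambda>x. 0"]) (auto intro: analytic_off_origin.const)
next
  case (coord j)
  show ?case
    by (intro exI[of _ "\<lambda>x. axis d 1 $ j"] conjI allI impI analytic_off_origin.const
        has_real_derivative_along_axis_coord)
next
  case inv_norm
  have "analytic_off_origin (\<lambda>x. (- 1) * x $ d * (inv_norm x * (inv_norm x * inv_norm x)))"
    by (intro analytic_off_origin.intros)
  with has_real_derivative_along_axis_inv_norm[of _ d] show ?case
    by (intro exI[of _ "\<lambda>x. (- 1) * x $ d * (inv_norm x * (inv_norm x * inv_norm x))"])
      (auto simp: power3_eq_cube mult.assoc)
next
  case (add f g)
  then obtain f' g' where "analytic_off_origin f'" "analytic_off_origin g'"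
    "\<forall>y. y \<noteq> 0 \<longrightarrow> ((\<lambda>t. f (y + t *\<^sub>R axis d 1)) has_real_derivative f' y) (at 0)"
    "\<forall>y. y \<noteq> 0 \<longrightarrow> ((\<lambda>t. g (y + t *\<^sub>R axis d 1)) has_real_derivative g' y) (at 0)"
    by blast
  then show ?case
    by (intro exI[of _ "\<lambda>x. f' x + g' x"]) (auto intro: analytic_off_origin.add DERIV_add)
next
  case (mult f g)
  then obtain f' g' where "analytic_off_origin f'" "analytic_off_origin g'"
    "\<forall>y. y \<noteq> 0 \<longrightarrow> ((\<lambda>t. f (y + t *\<^sub>R axis d 1)) has_real_derivative f' y) (at 0)"
    "\<forall>y. y \<noteq> 0 \<longrightarrow> ((\<lambda>t. g (y + t *\<^sub>R axis d 1)) has_real_derivative g' y) (at 0)"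
    by blast
  with mult.hyps show ?case
    by (intro exI[of _ "\<lambda>x. f' x * g x + f x * g' x"])
      (auto intro!: analytic_off_origin.add analytic_off_origin.mult DERIV_mult'[THEN DERIV_cong]
        simp: algebra_simps)
next
  case (powser f c)
  then obtain f' where f': "analytic_off_origin f'"
    "\<forall>y. y \<noteq> 0 \<longrightarrow> ((\<lambda>t. f (y + t *\<^sub>R axis d 1)) has_real_derivative f' y) (at 0)"
    by blast
  have "analytic_off_origin (\<lambda>x. powser (diffs c) (f x) * f' x)"
    by (intro analytic_off_origin.mult analytic_off_origin.powser f'(1) powser.hyps
        termdiff_converges_all)
  moreover have "((\<lambda>t. powser c (f (y + t *\<^sub>R axis d 1))) has_real_derivative
      powser (diffs c) (f y) * f' y) (at 0)" if "y \<noteq> 0" for y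
    using DERIV_chain2[OF powser_has_real_derivative[OF powser.hyps(2)] f'(2)[rule_format, OF that]]
    by simp
  ultimately show ?case by blast
qed

lemma analytic_off_origin_continuous_on:
  assumes "analytic_off_origin f"
  shows "continuous_on (- {0}) f"
  using assms
proof (induction rule: analytic_off_origin.induct)
  case inv_norm
  show ?case unfolding inv_norm_def by (intro continuous_intros) auto
next
  case (powser f c)
  have "continuous_on UNIV (powser c)" by (rule continuous_on_powser) (rule powser.hyps)
  then show ?case using powser.IH by (auto intro: continuous_on_compose2[of UNIV])
qed (auto intro!: continuous_intros)

lemma analytic_off_origin_pderivs:
  assumes "analytic_off_origin f"
  shows "\<exists>g. analytic_off_origin g \<and> (\<forall>y. y \<noteq> 0 \<longrightarrow> pderivs is f y = g y)"
proof (induction "is")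
  case (Cons i "is")
  then obtain g where g: "analytic_off_origin g" "\<forall>y. y \<noteq> 0 \<longrightarrow> pderivs is f y = g y" by blast
  from analytic_off_origin_axis_deriv[OF g(1), of i] obtain g' where g': "analytic_off_origin g'"
    "\<forall>y. y \<noteq> 0 \<longrightarrow> ((\<lambda>t. g (y + t *\<^sub>R axis i 1)) has_real_derivative g' y) (at 0)" by blast
  have "pderivs (i # is) f y = g' y" if "y \<noteq> 0" for y
    using pderiv_axis_eqI(1)[of "- {0}" y "pderivs is f" g i "g' y"] g g' that
    by (simp add: has_real_derivative_iff_has_vector_derivative open_Compl)
  with g' show ?case by blast
qed (use assms in auto)

lemma analytic_off_origin_smooth:
  assumes "analytic_off_origin f"
  shows "axis_smooth_on (- {0}) f" "continuous_on (- {0}) (pderivs is f)"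
proof -
  show "axis_smooth_on (- {0}) f" unfolding axis_smooth_on_def
  proof (intro allI ballI)
    fix "is" i and y :: "real^'a" assume y: "y \<in> - {0}"
    obtain g where g: "analytic_off_origin g" "\<forall>y. y \<noteq> 0 \<longrightarrow> pderivs is f y = g y"
      using analytic_off_origin_pderivs[OF assms] by blast
    obtain g' where "\<forall>y. y \<noteq> 0 \<longrightarrow> ((\<lambda>t. g (y + t *\<^sub>R axis i 1)) has_real_derivative g' y) (at 0)"
      using analytic_off_origin_axis_deriv[OF g(1), of i] by blast
    with g y show "(\<lambda>t. pderivs is f (y + t *\<^sub>R axis i 1)) differentiable at 0"
      using pderiv_axis_eqI(2)[of "- {0}" y "pderivs is f" g i "g' y"]
      by (simp add: has_real_derivative_iff_has_vector_derivative open_Compl)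
  qed
  obtain g where "analytic_off_origin g" "\<forall>y. y \<noteq> 0 \<longrightarrow> pderivs is f y = g y"
    using analytic_off_origin_pderivs[OF assms] by blast
  then show "continuous_on (- {0}) (pderivs is f)"
    using continuous_on_cong[of "- {0}" "- {0}" "pderivs is f" g] analytic_off_origin_continuous_on
    by auto
qed

section \<open>Zonal eigenfunctions on the sphere\<close>

text \<open>Coefficients of the hypergeometric polynomial \<open>\<^sub>2F\<^sub>1(-N, N+n-1; n/2; s)\<close>.  With
  \<open>s = (1 - p \<bullet> q)/2\<close> it is, up to normalisation, the zonal spherical harmonic of degree \<open>N\<close> on
  \<open>S\<^sup>n\<close> with pole \<open>q\<close>.\<close>
definition zonal_coeff :: "real \<Rightarrow> nat \<Rightarrow> nat \<Rightarrow> real" where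
  "zonal_coeff n N k =
     (\<Prod>i<k. ((real i - real N) * (real N + n - 1 + real i)) / ((real i + 1) * (real i + n / 2)))"

definition zonal_poly :: "real \<Rightarrow> nat \<Rightarrow> real \<Rightarrow> real" where
  "zonal_poly n N = powser (zonal_coeff n N)"

definition zonal_sum ::
    "real \<Rightarrow> nat \<Rightarrow> 'j set \<Rightarrow> ('j \<Rightarrow> real^'k::finite) \<Rightarrow> ('j \<Rightarrow> 'b::real_normed_vector) \<Rightarrow> real^'k \<Rightarrow> 'b"
  where "zonal_sum n N J q C p = (\<Sum>j\<in>J. zonal_poly n N ((1 - p \<bullet> q j) / 2) *\<^sub>R C j)"

lemma zonal_coeff_eq_0: "N < k \<Longrightarrow> zonal_coeff n N k = 0"
  unfolding zonal_coeff_def by (rule prod_zero) auto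

lemma zonal_poly_0 [simp]: "zonal_poly n N 0 = 1"
  by (simp add: zonal_poly_def powser_def zonal_coeff_def)

lemma summable_zonal_coeff: "summable (\<lambda>k. zonal_coeff n N k * w ^ k)"
  by (rule summable_finite[of "{..N}"]) (auto simp: zonal_coeff_eq_0)

definition shift_coeffs :: "(nat \<Rightarrow> real) \<Rightarrow> nat \<Rightarrow> real" where
  "shift_coeffs c k = (case k of 0 \<Rightarrow> 0 | Suc j \<Rightarrow> c j)"

lemma sums_shift_coeffs:
  assumes "summable (\<lambda>k. c k * w ^ k)"
  shows "(\<lambda>k. shift_coeffs c k * w ^ k) sums (w * powser c w)"
proof -
  have "(\<lambda>k. w * (c k * w ^ k)) sums (w * powser c w)"
    using sums_mult[OF summable_sums[OF assms]] unfolding powser_def .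
  then have "(\<lambda>k. shift_coeffs c (Suc k) * w ^ Suc k) sums (w * powser c w)"
    by (simp add: shift_coeffs_def mult_ac)
  then show ?thesis
    using sums_Suc_iff[of "\<lambda>k. shift_coeffs c k * w ^ k"] by (simp add: shift_coeffs_def)
qed

text \<open>The hypergeometric equation; the recursion defining \<open>zonal_coeff\<close> is exactly the
  vanishing of the coefficient of \<open>s\<^sup>k\<close>.\<close>
lemma zonal_poly_ode:
  fixes N :: nat and n s :: real
  assumes "n > 0"
  defines "a \<equiv> zonal_coeff n N"
  shows "s * (1 - s) * powser (diffs (diffs a)) s + (n / 2 - n * s) * powser (diffs a) s
    + (real N * (real N + n - 1)) * powser a s = 0"
proof -
  let ?d = "diffs a" and ?dd = "diffs (diffs a)" and ?l = "real N * (real N + n - 1)"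
  have sa: "summable (\<lambda>k. a k * w ^ k)" for w unfolding a_def by (rule summable_zonal_coeff)
  have sd: "summable (\<lambda>k. ?d k * w ^ k)" for w by (rule termdiff_converges_all[OF sa])
  have sdd: "summable (\<lambda>k. ?dd k * w ^ k)" for w by (rule termdiff_converges_all[OF sd])
  have rec: "(real k + 1) * (real k + n / 2) * a (Suc k) = (real k - real N) * (real N + n - 1 + real k) * a k" for k
  proof -
    have "(real k + 1) * (real k + n / 2) \<noteq> 0" using assms(1) by (simp add: add_pos_pos)
    then show ?thesis unfolding a_def zonal_coeff_def by (simp add: field_simps)
  qed
  have P: "(\<lambda>k. c k * s ^ k) sums powser c s" if "\<And>w. summable (\<lambda>k. c k * w ^ k)" for c
    unfolding powser_def by (rule summable_sums[OF that])
  have S: "(\<lambda>k. shift_coeffs c k * s ^ k) sums (s * powser c s)" if "\<And>w. summable (\<lambda>k. c k * w ^ k)" for c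
    by (rule sums_shift_coeffs[OF that])
  have SS: "(\<lambda>k. shift_coeffs (shift_coeffs ?dd) k * s ^ k) sums (s * (s * powser ?dd s))"
  proof -
    have "summable (\<lambda>k. shift_coeffs ?dd k * s ^ k)" "powser (shift_coeffs ?dd) s = s * powser ?dd s"
      using S[OF sdd] by (auto simp: powser_def sums_iff)
    with sums_shift_coeffs[of "shift_coeffs ?dd" s] show ?thesis by simp
  qed
  define e where "e k = (shift_coeffs ?dd k - shift_coeffs (shift_coeffs ?dd) k)
      + (n / 2 * ?d k - n * shift_coeffs ?d k) + ?l * a k" for k
  have "e k = 0" for k
  proof (cases k)
    case 0
    then show ?thesis using rec[of 0] by (simp add: e_def shift_coeffs_def diffs_def algebra_simps)
  next
    case (Suc j)
    have "shift_coeffs (shift_coeffs ?dd) (Suc j) = real j * (real j + 1) * a (Suc j)"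
      by (cases j) (auto simp: shift_coeffs_def diffs_def algebra_simps)
    with Suc rec[of "Suc j"] show ?thesis
      by (simp add: e_def shift_coeffs_def diffs_def algebra_simps)
  qed
  moreover have "(\<lambda>k. e k * s ^ k) sums ((s * powser ?dd s - s * (s * powser ?dd s))
      + (n / 2 * powser ?d s - n * (s * powser ?d s)) + ?l * powser a s)"
    unfolding e_def distrib_right left_diff_distrib mult.assoc
    by (intro sums_add sums_diff sums_mult S[OF sdd] SS P[OF sd] S[OF sd] P[OF sa])
  ultimately have "(\<lambda>k. 0) sums ((s * powser ?dd s - s * (s * powser ?dd s))
      + (n / 2 * powser ?d s - n * (s * powser ?d s)) + ?l * powser a s)"
    by simp
  from sums_unique2[OF this sums_zero] show ?thesis
    by (simp add: algebra_simps)
qed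

text \<open>The variable \<open>s = (1 - p \<bullet> q)/2\<close> of the zonal polynomial, as a degree-0 homogeneous
  function of \<open>y = |y| p\<close>, and its first and second derivatives along the \<open>i\<close>-th axis.\<close>
definition zonal_var :: "real^'k::finite \<Rightarrow> real^'k \<Rightarrow> real" where
  "zonal_var q y = (1 - (y \<bullet> q) * inv_norm y) / 2"

definition zonal_var_d1 :: "real^'k::finite \<Rightarrow> 'k \<Rightarrow> real^'k \<Rightarrow> real" where
  "zonal_var_d1 q i y = ((y \<bullet> q) * y $ i * inv_norm y ^ 3 - q $ i * inv_norm y) / 2"

definition zonal_var_d2 :: "real^'k::finite \<Rightarrow> 'k \<Rightarrow> real^'k \<Rightarrow> real" where
  "zonal_var_d2 q i y =
     q $ i * y $ i * inv_norm y ^ 3 + (y \<bullet> q) * (inv_norm y ^ 3 - 3 * (y $ i)\<^sup>2 * inv_norm y ^ 5) / 2"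

lemma has_real_derivative_zonal_var:
  fixes y q :: "real^'k::finite"
  assumes "y \<noteq> 0"
  shows "((\<lambda>t. zonal_var q (y + t *\<^sub>R axis i 1)) has_real_derivative zonal_var_d1 q i y) (at 0)"
proof -
  have "((\<lambda>t. (1 - ((y + t *\<^sub>R axis i 1) \<bullet> q) * inv_norm (y + t *\<^sub>R axis i 1)) / 2) has_real_derivative
      (0 - (((y + 0 *\<^sub>R axis i 1) \<bullet> q) * (- (y $ i) * inv_norm y ^ 3)
        + q $ i * inv_norm (y + 0 *\<^sub>R axis i 1))) / 2) (at 0)"
    by (intro DERIV_cdivide DERIV_diff DERIV_const DERIV_mult' has_real_derivative_along_axis_inner
        has_real_derivative_along_axis_inv_norm assms)
  then show ?thesis
    unfolding zonal_var_def zonal_var_d1_def by (rule DERIV_cong) (simp add: field_simps)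
qed

lemma has_real_derivative_zonal_var_d1:
  fixes y q :: "real^'k::finite"
  assumes "y \<noteq> 0"
  shows "((\<lambda>t. zonal_var_d1 q i (y + t *\<^sub>R axis i 1)) has_real_derivative zonal_var_d2 q i y) (at 0)"
proof -
  have dC: "((\<lambda>t. (y + t *\<^sub>R axis i 1) $ i) has_real_derivative 1) (at 0)"
    using has_real_derivative_along_axis_coord[of y i i 0] by simp
  note dI = has_real_derivative_along_axis_inner[of y i q 0]
  note dN = has_real_derivative_along_axis_inv_norm[OF assms, of i]
  from DERIV_cdivide[OF DERIV_diff[OF DERIV_mult'[OF DERIV_mult'[OF dI dC] DERIV_power[OF dN, of 3]]
      DERIV_cmult[OF dN, of "q $ i"]], of 2]
  show ?thesis
    unfolding zonal_var_d1_def zonal_var_d2_def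
    by (rule DERIV_cong) (simp add: field_simps eval_nat_numeral)
qed

lemma pderivs_powser_zonal_var_2:
  fixes x q :: "real^'k::finite"
  assumes "x \<noteq> 0" "\<And>w. summable (\<lambda>k. a k * w ^ k)"
  shows "pderivs [i, i] (\<lambda>y. powser a (zonal_var q y)) x =
    powser (diffs (diffs a)) (zonal_var q x) * (zonal_var_d1 q i x)\<^sup>2
    + powser (diffs a) (zonal_var q x) * zonal_var_d2 q i x"
proof -
  have U: "open (- {0::real^'k})" by (simp add: open_Compl)
  have sd: "summable (\<lambda>k. diffs a k * w ^ k)" for w by (rule termdiff_converges_all[OF assms(2)])
  have d1: "((\<lambda>t. powser c (zonal_var q (y + t *\<^sub>R axis i 1))) has_real_derivative
      powser (diffs c) (zonal_var q y) * zonal_var_d1 q i y) (at 0)"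
    if "y \<noteq> 0" "\<And>w. summable (\<lambda>k. c k * w ^ k)" for y c
    using DERIV_chain2[OF powser_has_real_derivative[OF that(2)] has_real_derivative_zonal_var[OF that(1)]]
    by simp
  have p1: "\<forall>y\<in>- {0}. pderiv_axis i (\<lambda>y. powser a (zonal_var q y)) y
      = powser (diffs a) (zonal_var q y) * zonal_var_d1 q i y"
    using pderiv_axis_eqI(1)[OF U _ _ d1[OF _ assms(2), unfolded has_real_derivative_iff_has_vector_derivative]]
    by auto
  have "((\<lambda>t. powser (diffs a) (zonal_var q (x + t *\<^sub>R axis i 1)) * zonal_var_d1 q i (x + t *\<^sub>R axis i 1))
      has_real_derivative powser (diffs (diffs a)) (zonal_var q x) * (zonal_var_d1 q i x)\<^sup>2
        + powser (diffs a) (zonal_var q x) * zonal_var_d2 q i x) (at 0)"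
    using DERIV_mult'[OF d1[OF assms(1) sd] has_real_derivative_zonal_var_d1[OF assms(1)]]
    by (simp add: algebra_simps power2_eq_square)
  then show ?thesis
    using pderiv_axis_eqI(1)[OF U _ p1] assms(1)
    by (simp add: has_real_derivative_iff_has_vector_derivative)
qed

text \<open>On the unit sphere, with \<open>A = x \<bullet> q\<close>: \<open>\<Sum>\<^sub>i (\<partial>\<^sub>i s)\<^sup>2 = (1 - A\<^sup>2)/4 = s (1 - s)\<close> and
  \<open>\<Sum>\<^sub>i \<partial>\<^sub>i\<^sup>2 s = n A / 2 = n/2 - n s\<close>, so the hypergeometric equation gives the eigenvalue.\<close>
lemma laplacian_zonal_poly:
  fixes x q :: "real^'k::finite"
  assumes "norm x = 1" "norm q = 1" and dim: "real CARD('k) = n + 1" and n: "n > 0"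
  shows "(\<Sum>i\<in>UNIV. pderivs [i, i] (\<lambda>y. zonal_poly n N (zonal_var q y)) x)
    = - (real N * (real N + n - 1)) * zonal_poly n N (zonal_var q x)"
proof -
  let ?a = "zonal_coeff n N"
  define A where "A = x \<bullet> q"
  have inv1: "inv_norm x = 1" using assms(1) by (simp add: inv_norm_def)
  have sq: "(\<Sum>i\<in>UNIV. v $ i * v $ i) = 1" if "norm v = 1" for v :: "real^'k"
    using that unfolding norm_eq_1 inner_vec_def by simp
  have qx: "(\<Sum>i\<in>UNIV. q $ i * x $ i) = A" unfolding A_def inner_vec_def by (simp add: mult.commute)
  have "(zonal_var_d1 q i x)\<^sup>2 = (1/4) * (q$i * q$i) - (A/2) * (q$i * x$i) + (A\<^sup>2/4) * (x$i * x$i)" for i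
    by (simp add: zonal_var_d1_def inv1 A_def power2_eq_square field_simps)
  then have "(\<Sum>i\<in>UNIV. (zonal_var_d1 q i x)\<^sup>2)
      = (1/4) * (\<Sum>i\<in>UNIV. q$i * q$i) - (A/2) * (\<Sum>i\<in>UNIV. q$i * x$i) + (A\<^sup>2/4) * (\<Sum>i\<in>UNIV. x$i * x$i)"
    by (simp add: sum.distrib sum_subtractf sum_distrib_left)
  then have d1: "(\<Sum>i\<in>UNIV. (zonal_var_d1 q i x)\<^sup>2) = (1 - A\<^sup>2) / 4"
    using sq[OF assms(2)] sq[OF assms(1)] qx by (simp add: field_simps power2_eq_square)
  have "zonal_var_d2 q i x = q$i * x$i + A/2 - (3*A/2) * (x$i * x$i)" for i
    by (simp add: zonal_var_d2_def inv1 A_def power2_eq_square field_simps)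
  then have "(\<Sum>i\<in>UNIV. zonal_var_d2 q i x)
      = (\<Sum>i\<in>UNIV. q$i * x$i) + real CARD('k) * (A/2) - (3*A/2) * (\<Sum>i\<in>UNIV. x$i * x$i)"
    by (simp add: sum.distrib sum_subtractf sum_distrib_left)
  then have d2: "(\<Sum>i\<in>UNIV. zonal_var_d2 q i x) = A * n / 2"
    using sq[OF assms(1)] qx dim by (simp add: algebra_simps)
  have s: "zonal_var q x = (1 - A) / 2" by (simp add: zonal_var_def inv1 A_def)
  have x0: "x \<noteq> 0" using assms(1) by auto
  have "(\<Sum>i\<in>UNIV. pderivs [i, i] (\<lambda>y. zonal_poly n N (zonal_var q y)) x)
      = (\<Sum>i\<in>UNIV. powser (diffs (diffs ?a)) (zonal_var q x) * (zonal_var_d1 q i x)\<^sup>2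
        + powser (diffs ?a) (zonal_var q x) * zonal_var_d2 q i x)"
    unfolding zonal_poly_def by (intro sum.cong refl pderivs_powser_zonal_var_2 x0 summable_zonal_coeff)
  also have "\<dots> = powser (diffs (diffs ?a)) (zonal_var q x) * ((1 - A\<^sup>2) / 4)
      + powser (diffs ?a) (zonal_var q x) * (A * n / 2)"
    by (simp add: sum.distrib sum_distrib_left[symmetric] d1 d2)
  also have "\<dots> = - (real N * (real N + n - 1)) * zonal_poly n N (zonal_var q x)"
    using zonal_poly_ode[OF n, of "zonal_var q x" N] unfolding s zonal_poly_def
    by (simp add: field_simps power2_eq_square)
  finally show ?thesis .
qed

lemma analytic_off_origin_zonal_poly: "analytic_off_origin (\<lambda>y. zonal_poly n N (zonal_var q y))"
proof -
  have "analytic_off_origin (\<lambda>y. 1/2 + (-1/2) * ((\<Sum>i\<in>UNIV. y $ i * q $ i) * inv_norm y))"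
    by (intro analytic_off_origin.intros analytic_off_origin_sum) auto
  moreover have "(\<lambda>y. 1/2 + (-1/2) * ((\<Sum>i\<in>UNIV. y $ i * q $ i) * inv_norm y)) = zonal_var q"
    by (auto simp: fun_eq_iff zonal_var_def inner_vec_def field_simps)
  ultimately show ?thesis
    unfolding zonal_poly_def by (intro analytic_off_origin.powser summable_zonal_coeff) simp
qed

lemma sphere_eigenfunction_zonal_sum:
  fixes q :: "'j \<Rightarrow> real^'k::finite" and C :: "'j \<Rightarrow> 'b::real_normed_vector"
  assumes J: "finite J" and q: "\<forall>j\<in>J. norm (q j) = 1" and dim: "real CARD('k) = n + 1" "n > 0"
    and nz: "\<exists>p\<in>sphere 0 1. zonal_sum n N J q C p \<noteq> 0"
  shows "sphere_eigenfunction (zonal_sum n N J q C) (real N * (real N + n - 1))"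
proof -
  define h where "h j y = zonal_poly n N (zonal_var (q j) y)" for j y
  define F where "F x = (\<Sum>j\<in>J. zonal_poly n N ((1 - (x /\<^sub>R norm x) \<bullet> q j) / 2) *\<^sub>R C j)" for x
  have U: "open (- {0::real^'k})" by (simp add: open_Compl)
  have "(x /\<^sub>R norm x) \<bullet> v = (x \<bullet> v) * inv_norm x" for x v :: "real^'k"
    unfolding inv_norm_def inner_scaleR_left by (simp add: divide_inverse_commute)
  then have F: "F = (\<lambda>y. \<Sum>j\<in>J. h j y *\<^sub>R C j)"
    unfolding F_def h_def zonal_var_def by (simp only:)
  have h: "axis_smooth_on (- {0}) (h j)" "continuous_on (- {0}) (pderivs is (h j))" for j "is"
    unfolding h_def using analytic_off_origin_smooth[OF analytic_off_origin_zonal_poly] by blast+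
  have hJ: "\<And>j. j \<in> J \<Longrightarrow> axis_smooth_on (- {0}) (h j)" by (rule h(1))
  note pd = pderivs_lincomb[where D = h and C = C, OF U J hJ]
  have "smooth_on_open (- {0}) F"
    unfolding smooth_on_open_def
  proof (intro conjI allI U)
    fix "is"
    have "continuous_on (- {0}) (\<lambda>x. \<Sum>j\<in>J. pderivs is (h j) x *\<^sub>R C j)"
      by (intro continuous_intros h(2))
    moreover have "continuous_on (- {0}) (pderivs is (\<lambda>y. \<Sum>j\<in>J. h j y *\<^sub>R C j))
        = continuous_on (- {0}) (\<lambda>x. \<Sum>j\<in>J. pderivs is (h j) x *\<^sub>R C j)"
      by (rule continuous_on_cong[OF refl pd])
    ultimately show "continuous_on (- {0}) (pderivs is F)" unfolding F by simp
  next
    show "\<forall>x\<in>- {0}. (\<lambda>t. pderivs is F (x + t *\<^sub>R axis i 1)) differentiable at 0" for "is" i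
      using axis_smooth_on_lincomb[where D = h and C = C, OF U J hJ] unfolding F axis_smooth_on_def by blast
  qed
  moreover have "laplacian F x = - (real N * (real N + n - 1)) *\<^sub>R F x"
    if "x \<in> sphere 0 1" for x
  proof -
    have "x \<in> - {0}" using that by auto
    then have "laplacian F x = (\<Sum>i\<in>UNIV. \<Sum>j\<in>J. pderivs [i, i] (h j) x *\<^sub>R C j)"
      unfolding laplacian_def F by (simp only: pd)
    also have "\<dots> = (\<Sum>j\<in>J. (\<Sum>i\<in>UNIV. pderivs [i, i] (h j) x) *\<^sub>R C j)"
      by (subst sum.swap) (simp add: scaleR_sum_left)
    also have "\<dots> = (\<Sum>j\<in>J. (- (real N * (real N + n - 1)) * h j x) *\<^sub>R C j)"
    proof (intro sum.cong refl)
      fix j assume "j \<in> J"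
      then have "(\<Sum>i\<in>UNIV. pderivs [i, i] (h j) x) = - (real N * (real N + n - 1)) * h j x"
        using laplacian_zonal_poly[OF _ _ dim, of x "q j" N] that q unfolding h_def by simp
      then show "(\<Sum>i\<in>UNIV. pderivs [i, i] (h j) x) *\<^sub>R C j = (- (real N * (real N + n - 1)) * h j x) *\<^sub>R C j"
        by (simp only:)
    qed
    finally show ?thesis
      unfolding F by (simp add: scaleR_sum_right algebra_simps)
  qed
  ultimately show ?thesis
    using nz unfolding sphere_eigenfunction_def Let_def F_def zonal_sum_def by auto
qed

section \<open>Rescaled zonal polynomials and Bessel functions\<close>

lemma powser_single: "powser (\<lambda>k. if k = 0 then a else 0) w = a"
proof -
  have "(\<lambda>k. (if k = 0 then a else 0) * w ^ k) = (\<lambda>k. if k = 0 then a else 0)" by auto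
  with sums_single[of 0 "\<lambda>_. a"] show ?thesis unfolding powser_def by (simp add: sums_iff)
qed

lemma powser_rescale: "powser (\<lambda>k. c k * t ^ k) w = powser c (t * w)"
  unfolding powser_def by (simp add: power_mult_distrib mult_ac)

lemma coeffs_tendsto_scaled:
  assumes c: "\<And>k. \<bar>c k\<bar> \<le> 1 / fact k" and t: "t \<longlonglongrightarrow> 0" "\<And>N. \<bar>t N\<bar> \<le> 1"
  shows "coeffs_tendsto (\<lambda>N k. c k * t N ^ k) (\<lambda>k. if k = 0 then c 0 else 0)"
  unfolding coeffs_tendsto_def
proof (intro conjI allI exI[of _ "\<lambda>k. 1 / fact k"])
  fix k
  show "(\<lambda>N. c k * t N ^ k) \<longlonglongrightarrow> (if k = 0 then c 0 else 0)"
    using tendsto_mult[OF tendsto_const tendsto_power[OF t(1)], of "c k" k] by (cases "k = 0") (auto simp: power_0_left)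
next
  fix N k
  have "\<bar>c k\<bar> * \<bar>t N\<bar> ^ k \<le> \<bar>c k\<bar>"
    using t(2)[of N] by (intro mult_left_le power_le_one) auto
  with c[of k] show "\<bar>c k * t N ^ k\<bar> \<le> 1 / fact k" by (simp add: abs_mult power_abs)
next
  show "summable (\<lambda>k. 1 / fact k * R ^ k)" for R :: real
    using summable_exp[of R] by (simp add: divide_inverse)
qed

definition cosc_coeff :: "nat \<Rightarrow> real" where
  "cosc_coeff k = (-1) ^ k / fact (2 * k + 2)"

definition sinc_coeff :: "nat \<Rightarrow> real" where
  "sinc_coeff k = (-1) ^ k / fact (2 * k + 1)"

lemma abs_cosc_coeff_le: "\<bar>cosc_coeff k\<bar> \<le> 1 / fact k"
proof -
  have "1 / fact (2 * k + 2) \<le> (1 / fact k :: real)" by (rule divide_left_mono[OF fact_mono]) auto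
  moreover have "\<bar>cosc_coeff k\<bar> = 1 / fact (2 * k + 2)" by (simp add: cosc_coeff_def abs_divide)
  ultimately show ?thesis by linarith
qed

lemma abs_sinc_coeff_le: "\<bar>sinc_coeff k\<bar> \<le> 1 / fact k"
proof -
  have "1 / fact (2 * k + 1) \<le> (1 / fact k :: real)" by (rule divide_left_mono[OF fact_mono]) auto
  moreover have "\<bar>sinc_coeff k\<bar> = 1 / fact (2 * k + 1)" by (simp add: sinc_coeff_def abs_divide)
  ultimately show ?thesis by linarith
qed

lemma cos_eq_powser_cosc: "cos a = 1 - a\<^sup>2 * powser cosc_coeff (a\<^sup>2)"
proof (cases "a = 0")
  case False
  have "(\<lambda>n. (- 1) ^ n / fact (2 * n) * a ^ (2 * n)) sums cos a" by (rule cos_paired)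
  then have "(\<lambda>n. (- 1) ^ Suc n / fact (2 * Suc n) * a ^ (2 * Suc n)) sums (cos a - 1)"
    using sums_Suc_iff[of "\<lambda>n. (- 1) ^ n / fact (2 * n) * a ^ (2 * n)"] by simp
  moreover have "(\<lambda>n. (- 1) ^ Suc n / fact (2 * Suc n) * a ^ (2 * Suc n))
      = (\<lambda>n. - (a\<^sup>2) * (cosc_coeff n * (a\<^sup>2) ^ n))"
    by (auto simp: cosc_coeff_def power_mult power2_eq_square)
  ultimately have "(\<lambda>n. - (a\<^sup>2) * (cosc_coeff n * (a\<^sup>2) ^ n)) sums (cos a - 1)" by simp
  from sums_divide[OF this, of "- (a\<^sup>2)"] False
  have "(\<lambda>n. cosc_coeff n * (a\<^sup>2) ^ n) sums ((cos a - 1) / - (a\<^sup>2))" by simp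
  then show ?thesis
    using False unfolding powser_def by (simp add: sums_iff field_simps)
qed simp

lemma sin_div_eq_powser_sinc: "a \<noteq> 0 \<Longrightarrow> sin a / a = powser sinc_coeff (a\<^sup>2)"
proof -
  assume a: "a \<noteq> 0"
  have "(\<lambda>n. (- 1) ^ n / fact (2 * n + 1) * a ^ (2 * n + 1)) sums sin a" by (rule sin_paired)
  moreover have "(\<lambda>n. (- 1) ^ n / fact (2 * n + 1) * a ^ (2 * n + 1)) = (\<lambda>n. sinc_coeff n * (a\<^sup>2) ^ n * a)"
    by (auto simp: sinc_coeff_def power_mult power2_eq_square)
  ultimately have "(\<lambda>n. sinc_coeff n * (a\<^sup>2) ^ n * a) sums sin a" by simp
  from sums_divide[OF this, of a] a have "(\<lambda>n. sinc_coeff n * (a\<^sup>2) ^ n) sums (sin a / a)" by simp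
  then show ?thesis unfolding powser_def by (simp add: sums_iff)
qed

text \<open>\<open>rescaled_zonal_coeff n N k = zonal_coeff n N k / N\<^sup>2\<^sup>k\<close>, written as a product of ratios that
  converge as \<open>N \<rightarrow> \<infinity>\<close>.\<close>
definition rescaled_zonal_ratio :: "real \<Rightarrow> nat \<Rightarrow> nat \<Rightarrow> real" where
  "rescaled_zonal_ratio n N i =
     ((real i - real N) * (real N + n - 1 + real i)) / ((real N)\<^sup>2 * ((real i + 1) * (real i + n / 2)))"

definition rescaled_zonal_coeff :: "real \<Rightarrow> nat \<Rightarrow> nat \<Rightarrow> real" where
  "rescaled_zonal_coeff n N k = (\<Prod>i<k. rescaled_zonal_ratio n N i)"

definition bessel_coeff :: "real \<Rightarrow> nat \<Rightarrow> real" where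
  "bessel_coeff n k = (-1) ^ k / (fact k * pochhammer (n / 2) k)"

lemma zonal_poly_eq_powser_rescaled:
  assumes "N \<ge> 1"
  shows "zonal_poly n N s = powser (rescaled_zonal_coeff n N) ((real N)\<^sup>2 * s)"
proof -
  have "rescaled_zonal_coeff n N k * ((real N)\<^sup>2) ^ k = (\<Prod>i<k. rescaled_zonal_ratio n N i * (real N)\<^sup>2)" for k
    by (simp add: rescaled_zonal_coeff_def prod.distrib)
  also have "\<dots> k = zonal_coeff n N k" for k
    unfolding zonal_coeff_def
    by (intro prod.cong refl) (use assms in \<open>simp add: rescaled_zonal_ratio_def\<close>)
  finally have "rescaled_zonal_coeff n N k * ((real N)\<^sup>2) ^ k = zonal_coeff n N k" for k .
  then show ?thesis
    unfolding zonal_poly_def powser_def by (simp add: power_mult_distrib mult.assoc[symmetric])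
qed

lemma rescaled_zonal_ratio_tendsto:
  assumes "n > 0"
  shows "(\<lambda>N. rescaled_zonal_ratio n N i) \<longlonglongrightarrow> -1 / ((real i + 1) * (real i + n / 2))"
proof -
  let ?d = "(real i + 1) * (real i + n / 2)"
  have "?d \<noteq> 0" using assms by (simp add: add_pos_pos)
  then have "(\<lambda>N. (real i * inverse (real N) - 1) * ((n - 1 + real i) * inverse (real N) + 1) / ?d)
      \<longlonglongrightarrow> (real i * 0 - 1) * ((n - 1 + real i) * 0 + 1) / ?d"
    by (intro tendsto_intros lim_inverse_n) auto
  moreover have "\<forall>\<^sub>F N in sequentially.
      (real i * inverse (real N) - 1) * ((n - 1 + real i) * inverse (real N) + 1) / ?d
      = rescaled_zonal_ratio n N i"
    using eventually_ge_at_top[of 1]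
    by eventually_elim (use assms in \<open>simp add: rescaled_zonal_ratio_def field_simps power2_eq_square\<close>)
  ultimately show ?thesis by (auto intro: Lim_transform_eventually)
qed

lemma abs_rescaled_zonal_ratio_le:
  assumes "n \<ge> 1" "i < N"
  shows "\<bar>rescaled_zonal_ratio n N i\<bar> \<le> 2 / (real i + 1)"
proof -
  have N1: "real N \<ge> 1" and iN: "real i < real N" using assms by auto
  have "(real N)\<^sup>2 * n - (real N - real i) * (real N + n - 1 + real i)
      = real N * (real N - 1) * (n - 1) + real i * (n - 1) + real i ^ 2"
    by (simp add: algebra_simps power2_eq_square)
  moreover have "real N * (real N - 1) * (n - 1) + real i * (n - 1) + real i ^ 2 \<ge> 0"
    using N1 assms(1) by (intro add_nonneg_nonneg mult_nonneg_nonneg) auto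
  ultimately have num: "(real N - real i) * (real N + n - 1 + real i) \<le> (real N)\<^sup>2 * n" by linarith
  have den: "(real N)\<^sup>2 * ((real i + 1) * (n / 2)) \<le> (real N)\<^sup>2 * ((real i + 1) * (real i + n / 2))"
    using assms(1) by (intro mult_left_mono) auto
  have pos: "0 < (real N)\<^sup>2 * ((real i + 1) * (n / 2))" using N1 assms(1) by auto
  have "\<bar>rescaled_zonal_ratio n N i\<bar>
      = (real N - real i) * (real N + n - 1 + real i) / ((real N)\<^sup>2 * ((real i + 1) * (real i + n / 2)))"
    using iN assms(1) by (simp add: rescaled_zonal_ratio_def abs_mult abs_divide)
  also have "\<dots> \<le> ((real N)\<^sup>2 * n) / ((real N)\<^sup>2 * ((real i + 1) * (n / 2)))"
    by (rule frac_le[OF _ num pos den]) (use iN assms(1) in simp)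
  also have "\<dots> = 2 / (real i + 1)"
    using pos by (simp add: field_simps)
  finally show ?thesis .
qed

lemma abs_rescaled_zonal_coeff_le:
  assumes "n \<ge> 1"
  shows "\<bar>rescaled_zonal_coeff n N k\<bar> \<le> 2 ^ k / fact k"
proof (cases "N < k")
  case True
  then have "rescaled_zonal_coeff n N k = 0"
    unfolding rescaled_zonal_coeff_def
    by (intro prod_zero bexI[of _ N]) (auto simp: rescaled_zonal_ratio_def)
  then show ?thesis by simp
next
  case False
  have "\<bar>rescaled_zonal_coeff n N k\<bar> \<le> (\<Prod>i<k. 2 / (real i + 1))"
    unfolding rescaled_zonal_coeff_def abs_prod
    using False abs_rescaled_zonal_ratio_le[OF assms] by (intro prod_mono) auto
  also have "(\<Prod>i<k. 2 / (real i + 1)) = 2 ^ k / fact k"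
  proof (induction k)
    case (Suc k)
    then have "(\<Prod>i<Suc k. 2 / (real i + 1)) = 2 ^ k / fact k * (2 / (real k + 1))" by simp
    also have "\<dots> = 2 ^ Suc k / fact (Suc k)" by (simp add: field_simps)
    finally show ?case .
  qed simp
  finally show ?thesis .
qed

lemma prod_bessel_ratio:
  assumes "n > 0"
  shows "(\<Prod>i<k. -1 / ((real i + 1) * (real i + n / 2))) = bessel_coeff n k"
proof (induction k)
  case (Suc k)
  have "pochhammer (n / 2) k > 0" "real k + n / 2 > 0" using assms by (simp_all add: pochhammer_pos)
  then have "bessel_coeff n k * (-1 / ((real k + 1) * (real k + n / 2)))
      = (-1) ^ Suc k / (((real k + 1) * fact k) * ((real k + n / 2) * pochhammer (n / 2) k))"
    by (simp add: bessel_coeff_def field_simps)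
  also have "\<dots> = bessel_coeff n (Suc k)"
    by (simp add: bessel_coeff_def pochhammer_rec' algebra_simps)
  finally show ?case using Suc by simp
qed (simp add: bessel_coeff_def)

lemma coeffs_tendsto_rescaled_zonal:
  assumes "n \<ge> 1"
  shows "coeffs_tendsto (rescaled_zonal_coeff n) (bessel_coeff n)"
  unfolding coeffs_tendsto_def
proof (intro conjI allI exI[of _ "\<lambda>k. 2 ^ k / fact k"])
  show "(\<lambda>N. rescaled_zonal_coeff n N k) \<longlonglongrightarrow> bessel_coeff n k" for k
  proof -
    have "(\<lambda>N. \<Prod>i<k. rescaled_zonal_ratio n N i) \<longlonglongrightarrow> (\<Prod>i<k. -1 / ((real i + 1) * (real i + n / 2)))"
      using assms by (intro tendsto_prod rescaled_zonal_ratio_tendsto) auto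
    then show ?thesis unfolding rescaled_zonal_coeff_def using prod_bessel_ratio assms by simp
  qed
  show "\<bar>rescaled_zonal_coeff n N k\<bar> \<le> 2 ^ k / fact k" for N k
    by (rule abs_rescaled_zonal_coeff_le[OF assms])
  show "summable (\<lambda>k. 2 ^ k / fact k * R ^ k)" for R :: real
    using summable_exp[of "2 * R"] by (simp add: divide_inverse power_mult_distrib mult_ac)
qed

lemma besselJ_scaled_eq_powser:
  assumes n: "n \<ge> 1" and t: "t \<ge> 0"
  shows "besselJ_scaled (n / 2 - 1) t = powser (bessel_coeff n) (t\<^sup>2 / 4) / (2 powr (n / 2 - 1) * Gamma (n / 2))"
proof (cases "t = 0")
  case True
  have "powser (bessel_coeff n) 0 = 1" unfolding powser_def powser_zero by (simp add: bessel_coeff_def)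
  with True show ?thesis by (simp add: besselJ_scaled_def)
next
  case False
  then have t0: "t > 0" using t by simp
  define \<nu> where "\<nu> = n / 2 - 1"
  define g where "g = Gamma (n / 2)"
  define st where "st k = bessel_coeff n k * (t\<^sup>2 / 4) ^ k" for k
  have g0: "g > 0" unfolding g_def using n by simp
  have sst: "summable st"
    unfolding st_def by (rule summable_powser_coeffs_lim[OF coeffs_tendsto_rescaled_zonal[OF n]])
  have tm: "(-1) ^ k / (fact k * Gamma (real k + \<nu> + 1)) * (t / 2) powr (2 * real k + \<nu>) = ((t / 2) powr \<nu> / g) * st k" for k
  proof -
    have "n / 2 \<notin> \<int>\<^sub>\<le>\<^sub>0" using n by auto
    then have G: "Gamma (real k + \<nu> + 1) = pochhammer (n / 2) k * g"
      using pochhammer_Gamma[of "n / 2" k] g0 unfolding g_def \<nu>_def by (simp add: field_simps add_ac)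
    have "(t / 2) powr (2 * real k + \<nu>) = (t / 2) ^ (2 * k) * (t / 2) powr \<nu>"
      using t0 by (simp add: powr_add powr_realpow[symmetric])
    also have "(t / 2) ^ (2 * k) = (t\<^sup>2 / 4) ^ k" by (simp add: power_mult power_divide)
    finally have P: "(t / 2) powr (2 * real k + \<nu>) = (t\<^sup>2 / 4) ^ k * (t / 2) powr \<nu>" .
    show ?thesis unfolding G P st_def bessel_coeff_def using g0 by (simp add: field_simps)
  qed
  have "besselJ \<nu> t = (\<Sum>k. ((t / 2) powr \<nu> / g) * st k)"
    unfolding besselJ_def tm ..
  also have "\<dots> = ((t / 2) powr \<nu> / g) * suminf st"
    by (rule suminf_mult[OF sst])
  finally have BJ: "besselJ \<nu> t = ((t / 2) powr \<nu> / g) * suminf st" .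
  have tt: "t powr (- \<nu>) * (t / 2) powr \<nu> = 1 / 2 powr \<nu>"
    using t0 by (simp add: powr_minus powr_divide)
  have "besselJ_scaled \<nu> t = t powr (- \<nu>) * besselJ \<nu> t"
    using False by (simp add: besselJ_scaled_def)
  also have "\<dots> = (t powr (- \<nu>) * (t / 2) powr \<nu>) * suminf st / g"
    unfolding BJ by simp
  also have "\<dots> = suminf st / (2 powr \<nu> * g)"
    unfolding tt by simp
  finally have "besselJ_scaled \<nu> t = suminf st / (2 powr \<nu> * g)" .
  then show ?thesis unfolding \<nu>_def g_def st_def powser_def by simp
qed

lemma
  fixes p0 :: "real^'k::finite" and L :: "real^'n::finite \<Rightarrow> real^'k"
  assumes "norm p0 = 1" "linear L" "\<forall>y. norm (L y) = norm y" "\<forall>y. inner (L y) p0 = 0"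
  shows inner_geo_chart_inv: "geo_chart_inv p0 L y \<bullet> geo_chart_inv p0 L z
      = cos (norm y) * cos (norm z) + (sin (norm y) / norm y) * (sin (norm z) / norm z) * (y \<bullet> z)"
    and norm_geo_chart_inv: "norm (geo_chart_inv p0 L y) = 1"
proof -
  have pp: "p0 \<bullet> p0 = 1" using assms(1) by (simp add: norm_eq_1)
  have lp: "L y \<bullet> p0 = 0" "p0 \<bullet> L z = 0" for y z using assms(4) by (auto simp: inner_commute)
  have ll: "L y \<bullet> L z = y \<bullet> z" for y z
    using assms(2,3) linear_add[OF assms(2), of y z] by (metis dot_norm)
  show inner: "geo_chart_inv p0 L y \<bullet> geo_chart_inv p0 L z
      = cos (norm y) * cos (norm z) + (sin (norm y) / norm y) * (sin (norm z) / norm z) * (y \<bullet> z)" for y z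
    unfolding geo_chart_inv_def by (simp add: inner_add_left inner_add_right pp lp ll algebra_simps)
  have "(sin (norm y) / norm y) * (sin (norm y) / norm y) * (y \<bullet> y) = (sin (norm y))\<^sup>2"
    by (cases "y = 0") (simp_all add: power2_norm_eq_inner[symmetric] field_simps power2_eq_square)
  then have "geo_chart_inv p0 L y \<bullet> geo_chart_inv p0 L y = 1"
    unfolding inner by (simp add: power2_eq_square[symmetric])
  then show "norm (geo_chart_inv p0 L y) = 1" by (simp add: norm_eq_1)
qed

definition scaled_coeffs :: "(nat \<Rightarrow> real) \<Rightarrow> nat \<Rightarrow> nat \<Rightarrow> real" where
  "scaled_coeffs c N k = c k * (1 / (real N)\<^sup>2) ^ k"

text \<open>The closed form of \<open>N\<^sup>2 (1 - p \<bullet> q)/2\<close> for \<open>p = \<Psi>\<^sup>-\<^sup>1(x/N)\<close>, \<open>q = \<Psi>\<^sup>-\<^sup>1(y/N)\<close>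
  (\<open>rescaled_chord_eq\<close>), obtained by expanding \<open>cos a = 1 - a\<^sup>2 C(a\<^sup>2)\<close> and \<open>sin a / a = S(a\<^sup>2)\<close>
  with \<open>a = |x|/N\<close>.\<close>
definition rescaled_chord :: "real^'n::finite \<Rightarrow> nat \<Rightarrow> real^'n \<Rightarrow> real" where
  "rescaled_chord y N x =
     ((x \<bullet> x) * powser (scaled_coeffs cosc_coeff N) (x \<bullet> x)
      + (y \<bullet> y) * powser (scaled_coeffs cosc_coeff N) (y \<bullet> y)
      - (1 / (real N)\<^sup>2) * (x \<bullet> x) * (y \<bullet> y) * powser (scaled_coeffs cosc_coeff N) (x \<bullet> x)
          * powser (scaled_coeffs cosc_coeff N) (y \<bullet> y)
      - powser (scaled_coeffs sinc_coeff N) (x \<bullet> x) * powser (scaled_coeffs sinc_coeff N) (y \<bullet> y) * (x \<bullet> y)) / 2"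

lemma rescaled_chord_eq:
  fixes p0 :: "real^'k::finite" and L :: "real^'n::finite \<Rightarrow> real^'k"
  assumes chart: "norm p0 = 1" "linear L" "\<forall>y. norm (L y) = norm y" "\<forall>y. inner (L y) p0 = 0"
    and N: "N \<ge> 1"
  shows "(real N)\<^sup>2 * ((1 - geo_chart_inv p0 L (x /\<^sub>R real N) \<bullet> geo_chart_inv p0 L (y /\<^sub>R real N)) / 2)
    = rescaled_chord y N x"
proof -
  define t where "t = 1 / (real N)\<^sup>2"
  have Nt: "(real N)\<^sup>2 * t = 1" using N by (simp add: t_def)
  have sq: "(norm (w /\<^sub>R real N))\<^sup>2 = t * (w \<bullet> w)" for w :: "real^'n"
    unfolding power2_norm_eq_inner by (simp add: t_def power2_eq_square divide_inverse)
  have C: "powser cosc_coeff ((norm (w /\<^sub>R real N))\<^sup>2) = powser (scaled_coeffs cosc_coeff N) (w \<bullet> w)" for w :: "real^'n"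
    unfolding sq scaled_coeffs_def powser_rescale t_def ..
  have S: "powser sinc_coeff ((norm (w /\<^sub>R real N))\<^sup>2) = powser (scaled_coeffs sinc_coeff N) (w \<bullet> w)" for w :: "real^'n"
    unfolding sq scaled_coeffs_def powser_rescale t_def ..
  let ?C = "powser (scaled_coeffs cosc_coeff N)" and ?S = "powser (scaled_coeffs sinc_coeff N)"
  have SS: "(sin (norm (x /\<^sub>R real N)) / norm (x /\<^sub>R real N)) * (sin (norm (y /\<^sub>R real N)) / norm (y /\<^sub>R real N))
        * ((x /\<^sub>R real N) \<bullet> (y /\<^sub>R real N))
      = ?S (x \<bullet> x) * ?S (y \<bullet> y) * (t * (x \<bullet> y))"
  proof (cases "x = 0 \<or> y = 0")
    case False
    have sinc: "sin (norm (w /\<^sub>R real N)) / norm (w /\<^sub>R real N) = ?S (w \<bullet> w)"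
      if "w \<noteq> 0" for w :: "real^'n"
      using sin_div_eq_powser_sinc[of "norm (w /\<^sub>R real N)"] that N unfolding S by simp
    from False have x0: "x \<noteq> 0" and y0: "y \<noteq> 0" by auto
    have ip: "(x /\<^sub>R real N) \<bullet> (y /\<^sub>R real N) = t * (x \<bullet> y)"
      by (simp add: t_def power2_eq_square divide_inverse)
    show ?thesis unfolding sinc[OF x0] sinc[OF y0] ip ..
  qed auto
  have CC: "cos (norm (w /\<^sub>R real N)) = 1 - t * (w \<bullet> w) * ?C (w \<bullet> w)" for w :: "real^'n"
    by (subst cos_eq_powser_cosc) (simp only: C, simp only: sq)
  have "(real N)\<^sup>2 * ((1 - ((1 - t * (x \<bullet> x) * ?C (x \<bullet> x)) * (1 - t * (y \<bullet> y) * ?C (y \<bullet> y))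
      + ?S (x \<bullet> x) * ?S (y \<bullet> y) * (t * (x \<bullet> y)))) / 2) = rescaled_chord y N x"
  proof -
    have "(real N)\<^sup>2 * ((1 - ((1 - t * (x \<bullet> x) * ?C (x \<bullet> x)) * (1 - t * (y \<bullet> y) * ?C (y \<bullet> y))
        + ?S (x \<bullet> x) * ?S (y \<bullet> y) * (t * (x \<bullet> y)))) / 2)
      = ((real N)\<^sup>2 * t) * (((x \<bullet> x) * ?C (x \<bullet> x) + (y \<bullet> y) * ?C (y \<bullet> y)
        - t * (x \<bullet> x) * (y \<bullet> y) * ?C (x \<bullet> x) * ?C (y \<bullet> y)
        - ?S (x \<bullet> x) * ?S (y \<bullet> y) * (x \<bullet> y)) / 2)"
      by (simp add: field_simps)
    then show ?thesis unfolding Nt rescaled_chord_def t_def[symmetric] by simp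
  qed
  then show ?thesis
    unfolding inner_geo_chart_inv[OF chart] SS CC .
qed

lemma analytic_seq_diff:
  "analytic_seq F f \<Longrightarrow> analytic_seq G g \<Longrightarrow> analytic_seq (\<lambda>N x. F N x - G N x) (\<lambda>x. f x - g x)"
  using analytic_seq.add[OF _ analytic_seq.mult[OF analytic_seq_const[of "-1"]], of F f G g] by simp

lemma analytic_seq_inner: "analytic_seq (\<lambda>N x. x \<bullet> z) (\<lambda>x. x \<bullet> z)"
  unfolding inner_vec_def inner_real_def
  by (intro analytic_seq_sum analytic_seq.mult analytic_seq.coord analytic_seq_const) simp

lemma analytic_seq_inner_self: "analytic_seq (\<lambda>N x. x \<bullet> x) (\<lambda>x. x \<bullet> x)"
  unfolding inner_vec_def inner_real_def
  by (intro analytic_seq_sum analytic_seq.mult analytic_seq.coord) simp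

lemma analytic_seq_rescaled_chord: "analytic_seq (rescaled_chord y) (\<lambda>x. (norm (x - y))\<^sup>2 / 4)"
proof -
  have t: "(\<lambda>N. 1 / (real N)\<^sup>2) \<longlonglongrightarrow> 0"
    using tendsto_power[OF lim_inverse_n, of 2] by (simp add: divide_inverse power_inverse)
  have t1: "\<bar>1 / (real N)\<^sup>2\<bar> \<le> 1" for N :: nat
    by (cases "N = 0") (auto simp: field_simps)
  define cL :: "nat \<Rightarrow> real" where "cL k = (if k = 0 then cosc_coeff 0 else 0)" for k
  define sL :: "nat \<Rightarrow> real" where "sL k = (if k = 0 then sinc_coeff 0 else 0)" for k
  have Cc: "coeffs_tendsto (scaled_coeffs cosc_coeff) cL"
    using coeffs_tendsto_scaled[OF abs_cosc_coeff_le t t1]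
    unfolding scaled_coeffs_def[abs_def] cL_def[abs_def] .
  have Sc: "coeffs_tendsto (scaled_coeffs sinc_coeff) sL"
    using coeffs_tendsto_scaled[OF abs_sinc_coeff_le t t1]
    unfolding scaled_coeffs_def[abs_def] sL_def[abs_def] .
  have "analytic_seq (\<lambda>N x. ((x \<bullet> x) * powser (scaled_coeffs cosc_coeff N) (x \<bullet> x)
      + (y \<bullet> y) * powser (scaled_coeffs cosc_coeff N) (y \<bullet> y)
      - (1 / (real N)\<^sup>2) * (x \<bullet> x) * (y \<bullet> y) * powser (scaled_coeffs cosc_coeff N) (x \<bullet> x)
          * powser (scaled_coeffs cosc_coeff N) (y \<bullet> y)
      - powser (scaled_coeffs sinc_coeff N) (x \<bullet> x) * powser (scaled_coeffs sinc_coeff N) (y \<bullet> y) * (x \<bullet> y))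
      * (1 / 2))
    (\<lambda>x. ((x \<bullet> x) * powser cL (x \<bullet> x) + (y \<bullet> y) * powser cL (y \<bullet> y)
      - 0 * (x \<bullet> x) * (y \<bullet> y) * powser cL (x \<bullet> x) * powser cL (y \<bullet> y)
      - powser sL (x \<bullet> x) * powser sL (y \<bullet> y) * (x \<bullet> y)) * (1 / 2))"
    by (intro analytic_seq.mult analytic_seq.add analytic_seq_diff analytic_seq.powser analytic_seq.const
        analytic_seq_const analytic_seq_inner analytic_seq_inner_self Cc Sc t)
  moreover have "powser cL w = 1 / 2" "powser sL w = 1" for w
    unfolding cL_def sL_def powser_single by (simp_all add: cosc_coeff_def sinc_coeff_def)
  ultimately show ?thesis
    unfolding rescaled_chord_def[abs_def]
    by (simp add: power2_norm_eq_inner inner_diff_left inner_diff_right inner_commute field_simps)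
qed

lemma rescaled_zonal_poly_analytic_seq:
  fixes p0 :: "real^'k::finite" and L :: "real^'n::finite \<Rightarrow> real^'k" and y :: "real^'n"
  assumes chart: "norm p0 = 1" "linear L" "\<forall>y. norm (L y) = norm y" "\<forall>y. inner (L y) p0 = 0"
  defines "n \<equiv> real CARD('n)"
  obtains F where "analytic_seq F (\<lambda>x. besselJ_scaled (n / 2 - 1) (norm (x - y)))"
    and "\<And>N x. N \<ge> 1 \<Longrightarrow> F N x = zonal_poly n N
          ((1 - geo_chart_inv p0 L (x /\<^sub>R real N) \<bullet> geo_chart_inv p0 L (y /\<^sub>R real N)) / 2)
        / (2 powr (n / 2 - 1) * Gamma (n / 2))"
proof
  have n: "n \<ge> 1" unfolding n_def by simp
  define \<kappa> where "\<kappa> = 1 / (2 powr (n / 2 - 1) * Gamma (n / 2))"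
  show "analytic_seq (\<lambda>N x. \<kappa> * powser (rescaled_zonal_coeff n N) (rescaled_chord y N x))
      (\<lambda>x. besselJ_scaled (n / 2 - 1) (norm (x - y)))"
    using analytic_seq.mult[OF analytic_seq_const[of \<kappa>]
        analytic_seq.powser[OF analytic_seq_rescaled_chord coeffs_tendsto_rescaled_zonal[OF n]]]
    by (simp add: besselJ_scaled_eq_powser[OF n] \<kappa>_def power_divide)
  show "\<kappa> * powser (rescaled_zonal_coeff n N) (rescaled_chord y N x) = zonal_poly n N
      ((1 - geo_chart_inv p0 L (x /\<^sub>R real N) \<bullet> geo_chart_inv p0 L (y /\<^sub>R real N)) / 2)
      / (2 powr (n / 2 - 1) * Gamma (n / 2))" if "N \<ge> 1" for N x
  proof -
    have "zonal_poly n N ((1 - geo_chart_inv p0 L (x /\<^sub>R real N) \<bullet> geo_chart_inv p0 L (y /\<^sub>R real N)) / 2)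
        = powser (rescaled_zonal_coeff n N) (rescaled_chord y N x)"
      by (simp only: zonal_poly_eq_powser_rescaled[OF that] rescaled_chord_eq[OF chart that])
    then show ?thesis by (simp add: \<kappa>_def)
  qed
qed

lemma analytic_seq_perturbed_lincomb_Cr_less:
  fixes F :: "nat \<Rightarrow> nat \<Rightarrow> real^'n::finite \<Rightarrow> real" and c :: "nat \<Rightarrow> 'b::real_normed_vector" and v :: 'b
  assumes F: "\<And>j. analytic_seq (F j) (B j)" and "\<delta> > 0"
  shows "\<exists>\<epsilon>>0. \<forall>\<^sub>F N in sequentially. \<forall>e. \<bar>e\<bar> \<le> \<epsilon> \<longrightarrow>
    (let g = (\<lambda>x. (\<Sum>j\<in>{1..N'}. B j x *\<^sub>R c j) - (\<Sum>j\<in>{0..N'}. F j N x *\<^sub>R (if j = 0 then e *\<^sub>R v else c j)))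
     in bdd_above (Cr_values r (ball 0 1) g) \<and> Cr_norm r (ball 0 1) g < \<delta>)"
proof -
  obtain M where M: "\<And>is x. length is \<le> r \<Longrightarrow> x \<in> cball 0 1 \<Longrightarrow> \<bar>pderivs is (B 0) x\<bar> \<le> M"
    using analytic_seq_Cr_bounded[OF F compact_cball] by metis
  define Cs where "Cs = (\<Sum>j\<in>{1..N'}. norm (c j))"
  define K where "K = (norm v + 1) * (\<bar>M\<bar> + 1)"
  define \<epsilon> where "\<epsilon> = \<delta> / (4 * K)"
  define \<eta> where "\<eta> = min 1 (\<delta> / (4 * (Cs + 1)))"
  have Cs: "Cs \<ge> 0" unfolding Cs_def by (simp add: sum_nonneg)
  have K: "K > 0" unfolding K_def by (intro mult_pos_pos add_nonneg_pos) auto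
  have \<epsilon>: "\<epsilon> > 0" unfolding \<epsilon>_def using \<open>\<delta> > 0\<close> K by simp
  have \<eta>: "\<eta> > 0" "\<eta> \<le> 1" unfolding \<eta>_def using \<open>\<delta> > 0\<close> Cs by auto
  have less: "(\<bar>M\<bar> + \<eta>) * (\<bar>e\<bar> * norm v) + \<eta> * Cs < \<delta>" if "\<bar>e\<bar> \<le> \<epsilon>" for e
  proof -
    have "(\<bar>M\<bar> + \<eta>) * (\<bar>e\<bar> * norm v) \<le> (\<bar>M\<bar> + 1) * (\<epsilon> * (norm v + 1))"
      using that \<eta>(2) by (intro mult_mono) (auto intro: mult_mono)
    also have "\<dots> = \<epsilon> * K" by (simp add: K_def)
    also have "\<dots> = \<delta> / 4" using K by (simp add: \<epsilon>_def)
    moreover have "\<eta> * Cs \<le> \<delta> / (4 * (Cs + 1)) * Cs"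
      unfolding \<eta>_def using Cs by (intro mult_right_mono) auto
    moreover have "\<delta> / (4 * (Cs + 1)) * Cs < \<delta> / 4"
      using \<open>\<delta> > 0\<close> Cs by (simp add: field_simps)
    ultimately show ?thesis using \<open>\<delta> > 0\<close> by linarith
  qed
  have "\<forall>\<^sub>F N in sequentially. \<forall>j\<in>{0..N'}. \<forall>is. length is \<le> r \<longrightarrow>
      (\<forall>x\<in>cball 0 1. \<bar>pderivs is (F j N) x - pderivs is (B j) x\<bar> < \<eta>)"
    by (intro eventually_ball_finite finite_atLeastAtMost ballI analytic_seq_Cr_tendsto F compact_cball \<eta>(1))
  then have "\<forall>\<^sub>F N in sequentially. \<forall>e. \<bar>e\<bar> \<le> \<epsilon> \<longrightarrow>
    (let g = (\<lambda>x. (\<Sum>j\<in>{1..N'}. B j x *\<^sub>R c j) - (\<Sum>j\<in>{0..N'}. F j N x *\<^sub>R (if j = 0 then e *\<^sub>R v else c j)))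
     in bdd_above (Cr_values r (ball 0 1) g) \<and> Cr_norm r (ball 0 1) g < \<delta>)"
  proof (rule eventually_mono, intro allI impI)
    fix N e assume close: "\<forall>j\<in>{0..N'}. \<forall>is. length is \<le> r \<longrightarrow>
      (\<forall>x\<in>cball 0 1. \<bar>pderivs is (F j N) x - pderivs is (B j) x\<bar> < \<eta>)" and e: "\<bar>e\<bar> \<le> \<epsilon>"
    show "let g = (\<lambda>x. (\<Sum>j\<in>{1..N'}. B j x *\<^sub>R c j)
        - (\<Sum>j\<in>{0..N'}. F j N x *\<^sub>R (if j = 0 then e *\<^sub>R v else c j)))
      in bdd_above (Cr_values r (ball 0 1) g) \<and> Cr_norm r (ball 0 1) g < \<delta>"
      unfolding Let_def
    proof (rule Cr_norm_perturbed_lincomb_less[where M = "\<bar>M\<bar>"])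
      show "axis_smooth_on UNIV (B j)" "axis_smooth_on UNIV (F j N)" for j
        by (rule analytic_seq_axis_smooth_on[OF F])+
      show "ball (0::real^'n) 1 \<noteq> {}" by simp
      show "\<bar>pderivs is (F j N) x - pderivs is (B j) x\<bar> \<le> \<eta>"
        if "j \<le> N'" "length is \<le> r" "x \<in> ball 0 1" for j "is" x
        using close that by (simp add: less_imp_le)
      show "\<bar>pderivs is (B 0) x\<bar> \<le> \<bar>M\<bar>" if "length is \<le> r" "x \<in> ball 0 1" for "is" x
        using M[OF that(1)] that(2) by (simp add: order_trans[OF _ abs_ge_self])
      show "(\<bar>M\<bar> + \<eta>) * (\<bar>e\<bar> * norm v) + \<eta> * (\<Sum>j\<in>{1..N'}. norm (c j)) < \<delta>"
        using less[OF e] unfolding Cs_def .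
    qed
  qed
  with \<epsilon> show ?thesis by blast
qed

lemma rescaled_zonal_sum_Cr_approx:
  fixes p0 :: "real^'k::finite" and L :: "real^'n::finite \<Rightarrow> real^'k" and y :: "nat \<Rightarrow> real^'n"
    and c :: "nat \<Rightarrow> 'b::real_normed_vector" and v :: 'b
  assumes chart: "norm p0 = 1" "linear L" "\<forall>y. norm (L y) = norm y" "\<forall>y. inner (L y) p0 = 0"
    and "\<delta> > 0"
  defines "n \<equiv> real CARD('n)"
    and "\<kappa> \<equiv> 1 / (2 powr (real CARD('n) / 2 - 1) * Gamma (real CARD('n) / 2))"
  shows "\<exists>\<epsilon>>0. \<forall>\<^sub>F N in sequentially. \<forall>e. \<bar>e\<bar> \<le> \<epsilon> \<longrightarrow>
    (let g = (\<lambda>x. (\<Sum>j\<in>{1..N'}. besselJ_scaled (n / 2 - 1) (norm (x - y j)) *\<^sub>R c j)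
        - zonal_sum n N {0..N'} (\<lambda>j. geo_chart_inv p0 L (y j /\<^sub>R real N))
            (\<lambda>j. if j = 0 then e *\<^sub>R (\<kappa> *\<^sub>R v) else \<kappa> *\<^sub>R c j) (geo_chart_inv p0 L (x /\<^sub>R real N)))
     in bdd_above (Cr_values r (ball 0 1) g) \<and> Cr_norm r (ball 0 1) g < \<delta>)"
proof -
  have "\<forall>j. \<exists>F. analytic_seq F (\<lambda>x. besselJ_scaled (n / 2 - 1) (norm (x - y j))) \<and>
      (\<forall>N x. N \<ge> 1 \<longrightarrow> F N x = zonal_poly n N
        ((1 - geo_chart_inv p0 L (x /\<^sub>R real N) \<bullet> geo_chart_inv p0 L (y j /\<^sub>R real N)) / 2)
        / (2 powr (n / 2 - 1) * Gamma (n / 2)))"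
    unfolding n_def by (metis rescaled_zonal_poly_analytic_seq[OF chart])
  then obtain F where F: "\<And>j. analytic_seq (F j) (\<lambda>x. besselJ_scaled (n / 2 - 1) (norm (x - y j)))"
    and FZ: "\<And>j N x. N \<ge> 1 \<Longrightarrow> F j N x = zonal_poly n N
      ((1 - geo_chart_inv p0 L (x /\<^sub>R real N) \<bullet> geo_chart_inv p0 L (y j /\<^sub>R real N)) / 2)
      / (2 powr (n / 2 - 1) * Gamma (n / 2))"
    by metis
  have eq: "zonal_sum n N {0..N'} (\<lambda>j. geo_chart_inv p0 L (y j /\<^sub>R real N))
      (\<lambda>j. if j = 0 then e *\<^sub>R (\<kappa> *\<^sub>R v) else \<kappa> *\<^sub>R c j) (geo_chart_inv p0 L (x /\<^sub>R real N))
    = (\<Sum>j\<in>{0..N'}. F j N x *\<^sub>R (if j = 0 then e *\<^sub>R v else c j))" if "N \<ge> 1" for N e x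
    unfolding zonal_sum_def using that by (intro sum.cong) (auto simp: FZ \<kappa>_def n_def)
  obtain \<epsilon> where "\<epsilon> > 0" and ev: "\<forall>\<^sub>F N in sequentially. \<forall>e. \<bar>e\<bar> \<le> \<epsilon> \<longrightarrow>
    (let g = (\<lambda>x. (\<Sum>j\<in>{1..N'}. besselJ_scaled (n / 2 - 1) (norm (x - y j)) *\<^sub>R c j)
        - (\<Sum>j\<in>{0..N'}. F j N x *\<^sub>R (if j = 0 then e *\<^sub>R v else c j)))
     in bdd_above (Cr_values r (ball 0 1) g) \<and> Cr_norm r (ball 0 1) g < \<delta>)"
    using analytic_seq_perturbed_lincomb_Cr_less[where F = F and N' = N' and c = c and v = v and r = r,
        OF F \<open>\<delta> > 0\<close>] by blast
  have "\<forall>\<^sub>F N in sequentially. \<forall>e. \<bar>e\<bar> \<le> \<epsilon> \<longrightarrow>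
    (let g = (\<lambda>x. (\<Sum>j\<in>{1..N'}. besselJ_scaled (n / 2 - 1) (norm (x - y j)) *\<^sub>R c j)
        - zonal_sum n N {0..N'} (\<lambda>j. geo_chart_inv p0 L (y j /\<^sub>R real N))
            (\<lambda>j. if j = 0 then e *\<^sub>R (\<kappa> *\<^sub>R v) else \<kappa> *\<^sub>R c j) (geo_chart_inv p0 L (x /\<^sub>R real N)))
     in bdd_above (Cr_values r (ball 0 1) g) \<and> Cr_norm r (ball 0 1) g < \<delta>)"
    using eventually_conj[OF eventually_ge_at_top[of 1] ev]
  proof (rule eventually_mono, intro allI impI)
    fix N e assume N: "1 \<le> N \<and> (\<forall>e. \<bar>e\<bar> \<le> \<epsilon> \<longrightarrow> (let g = (\<lambda>x. (\<Sum>j\<in>{1..N'}. besselJ_scaled (n / 2 - 1)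
      (norm (x - y j)) *\<^sub>R c j) - (\<Sum>j\<in>{0..N'}. F j N x *\<^sub>R (if j = 0 then e *\<^sub>R v else c j)))
      in bdd_above (Cr_values r (ball 0 1) g) \<and> Cr_norm r (ball 0 1) g < \<delta>))" and e: "\<bar>e\<bar> \<le> \<epsilon>"
    show "let g = (\<lambda>x. (\<Sum>j\<in>{1..N'}. besselJ_scaled (n / 2 - 1) (norm (x - y j)) *\<^sub>R c j)
        - zonal_sum n N {0..N'} (\<lambda>j. geo_chart_inv p0 L (y j /\<^sub>R real N))
            (\<lambda>j. if j = 0 then e *\<^sub>R (\<kappa> *\<^sub>R v) else \<kappa> *\<^sub>R c j) (geo_chart_inv p0 L (x /\<^sub>R real N)))
      in bdd_above (Cr_values r (ball 0 1) g) \<and> Cr_norm r (ball 0 1) g < \<delta>"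
      unfolding eq[OF conjunct1[OF N]] using N e by blast
  qed
  with \<open>\<epsilon> > 0\<close> show ?thesis by blast
qed

text \<open>A zonal sum may vanish identically (e.g. when all \<open>c j = 0\<close>); adding a multiple of the zonal
  polynomial with pole \<open>q 0\<close>, chosen among \<open>0\<close> and \<open>\<epsilon>\<close>, makes it non-zero at \<open>q 0\<close>.\<close>
lemma zonal_sum_eigenfunction_perturbed:
  fixes q :: "nat \<Rightarrow> real^'k::finite" and C :: "nat \<Rightarrow> 'b::real_normed_vector"
  assumes q: "\<forall>j\<in>{0..N'}. norm (q j) = 1" and dim: "real CARD('k) = n + 1" "n > 0"
    and w: "w \<noteq> 0" and \<epsilon>: "\<epsilon> \<noteq> 0"
  obtains e where "e \<in> {0, \<epsilon>}"
    "sphere_eigenfunction (zonal_sum n N {0..N'} q (\<lambda>j. if j = 0 then e *\<^sub>R w else C j)) (real N * (real N + n - 1))"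
proof -
  let ?\<psi> = "\<lambda>e. zonal_sum n N {0..N'} q (\<lambda>j. if j = 0 then e *\<^sub>R w else C j)"
  have "{0..N'} = insert 0 {1..N'}" by auto
  moreover have "q 0 \<bullet> q 0 = 1" using q by (simp add: norm_eq_1)
  ultimately have \<psi>0: "?\<psi> e (q 0) = e *\<^sub>R w + ?\<psi> 0 (q 0)" for e
    by (simp add: zonal_sum_def)
  obtain e where e: "e \<in> {0, \<epsilon>}" "?\<psi> e (q 0) \<noteq> 0"
  proof (cases "?\<psi> 0 (q 0) = 0")
    case True
    with \<psi>0[of \<epsilon>] w \<epsilon> show ?thesis by (intro that[of \<epsilon>]) auto
  qed (intro that[of 0], auto)
  moreover have "q 0 \<in> sphere 0 1" using q by simp
  ultimately show ?thesis
    by (intro that[of e] sphere_eigenfunction_zonal_sum finite_atLeastAtMost q dim) auto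
qed

theorem proposition2p3:
  fixes p0 :: "real^('n::finite option)"
    and L :: "real^'n \<Rightarrow> real^('n option)"
    and c :: "nat \<Rightarrow> real^'m::finite"
    and xp :: "nat \<Rightarrow> real^'n"
    and N' r :: nat and \<delta> :: real
  assumes "CARD('n) \<ge> 2"
    and "norm p0 = 1"
    and "linear L" and "\<forall>y. norm (L y) = norm y" and "\<forall>y. inner (L y) p0 = 0"
    and "r > 0"
    and "\<delta> > 0"
  shows "\<forall>\<^sub>F N in sequentially. \<exists>\<psi> :: real^('n option) \<Rightarrow> real^'m.
           sphere_eigenfunction \<psi> (real N * (real N + real CARD('n) - 1)) \<and>
           (let \<phi> = (\<lambda>x. \<Sum>j\<in>{1..N'}. besselJ_scaled (real CARD('n) / 2 - 1) (norm (x - xp j)) *\<^sub>R c j);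
                g = (\<lambda>x. \<phi> x - \<psi> (geo_chart_inv p0 L (x /\<^sub>R real N)))
            in bdd_above (Cr_values r (ball 0 1) g) \<and> Cr_norm r (ball 0 1) g < \<delta>)"
proof -
  note chart = assms(2-5)
  define n where "n = real CARD('n)"
  define \<kappa> where "\<kappa> = 1 / (2 powr (n / 2 - 1) * Gamma (n / 2))"
  define y where "y j = (if j = 0 then 0 else xp j)" for j
  define v :: "real^'m" where "v = axis undefined 1"
  define \<psi> where "\<psi> N e = zonal_sum n N {0..N'} (\<lambda>j. geo_chart_inv p0 L (y j /\<^sub>R real N))
    (\<lambda>j. if j = 0 then e *\<^sub>R (\<kappa> *\<^sub>R v) else \<kappa> *\<^sub>R c j)" for N e
  define err where "err N e = (\<lambda>x. (\<Sum>j\<in>{1..N'}. besselJ_scaled (n / 2 - 1) (norm (x - xp j)) *\<^sub>R c j)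
    - \<psi> N e (geo_chart_inv p0 L (x /\<^sub>R real N)))" for N e
  have ysum: "(\<Sum>j\<in>{1..N'}. besselJ_scaled (n / 2 - 1) (norm (x - y j)) *\<^sub>R c j)
      = (\<Sum>j\<in>{1..N'}. besselJ_scaled (n / 2 - 1) (norm (x - xp j)) *\<^sub>R c j)" for x
    by (intro sum.cong) (auto simp: y_def)
  obtain \<epsilon> where "\<epsilon> > 0" and approx: "\<forall>\<^sub>F N in sequentially. \<forall>e. \<bar>e\<bar> \<le> \<epsilon> \<longrightarrow>
      bdd_above (Cr_values r (ball 0 1) (err N e)) \<and> Cr_norm r (ball 0 1) (err N e) < \<delta>"
    using rescaled_zonal_sum_Cr_approx[OF chart assms(7), where y = y and v = v and c = c and N' = N' and r = r]
    unfolding err_def \<psi>_def Let_def n_def[symmetric] \<kappa>_def[symmetric] ysum by blast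
  have dim: "real CARD('n option) = n + 1" "n > 0" by (simp_all add: n_def)
  have "Gamma (n / 2) > 0" using dim(2) by (intro Gamma_real_pos) simp
  then have w: "\<kappa> *\<^sub>R v \<noteq> 0" by (simp add: \<kappa>_def v_def)
  show ?thesis
    using approx
  proof (rule eventually_mono)
    fix N assume est: "\<forall>e. \<bar>e\<bar> \<le> \<epsilon> \<longrightarrow>
      bdd_above (Cr_values r (ball 0 1) (err N e)) \<and> Cr_norm r (ball 0 1) (err N e) < \<delta>"
    have q: "\<forall>j\<in>{0..N'}. norm (geo_chart_inv p0 L (y j /\<^sub>R real N)) = 1"
      using norm_geo_chart_inv[OF chart] by blast
    obtain e where e: "e \<in> {0, \<epsilon>}" and eig: "sphere_eigenfunction (\<psi> N e) (real N * (real N + n - 1))"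
      using zonal_sum_eigenfunction_perturbed[OF q dim w, where \<epsilon> = \<epsilon> and C = "\<lambda>j. \<kappa> *\<^sub>R c j"]
        \<open>\<epsilon> > 0\<close> unfolding \<psi>_def by auto
    have "\<bar>e\<bar> \<le> \<epsilon>" using e \<open>\<epsilon> > 0\<close> by auto
    with est eig show "\<exists>\<psi>. sphere_eigenfunction \<psi> (real N * (real N + real CARD('n) - 1)) \<and> (let
        \<phi> = (\<lambda>x. \<Sum>j\<in>{1..N'}. besselJ_scaled (real CARD('n) / 2 - 1) (norm (x - xp j)) *\<^sub>R c j);
        g = (\<lambda>x. \<phi> x - \<psi> (geo_chart_inv p0 L (x /\<^sub>R real N)))
      in bdd_above (Cr_values r (ball 0 1) g) \<and> Cr_norm r (ball 0 1) g < \<delta>)"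
      unfolding Let_def err_def n_def by (intro exI[of _ "\<psi> N e"] conjI) (simp_all only: simp_thms)
  qed
qed

end
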